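(* For every $m\ge1$, each of the sequences $\big(\#\Pi_n(1/2/\ldots/m)\big)_{n\ge0}$, $\big(\#\Pi_n(12\ldots m)\big)_{n\ge0}$ and $\big(\#\Pi_n(12/3/4/\ldots/m)\big)_{n\ge0}$ (the last for $m\ge2$) is P-recursive. Furthermore, for every partition $\pi$ of $[3]$, the sequence $\big(\#\Pi_n(\pi)\big)_{n\ge0}$ is P-recursive.
   Context: $\Pi_n$ is the set of partitions of $[n]=\{1,\ldots,n\}$, written with slashes between blocks. Standardization $\mathrm{st}$ is the order-preserving bijection of a finite integer set onto $[\#S]$. A subpartition of $\sigma$ is a partition each of whose blocks lies in a different block of $\sigma$; $\sigma$ contains $\pi$ if some subpartition $\sigma'$ has $\mathrm{st}(\sigma')=\pi$, else avoids $\pi$; $\Pi_n(\pi)$ is the set of $\sigma\in\Pi_n$ avoiding $\pi$. $1/2/\ldots/m$ is the all-singletons partition of $[m]$, $12\ldots m$ the one-block partition, $12/3/\ldots/m$ has blocks $\{1,2\},\{3\},\ldots,\{m\}$. A sequence $(a_n)$ is P-recursive if there are polynomials $P_0,\ldots,P_k$, not all zero, with $\sum_{i=0}^kP_i(n)a_{n+i}=0$ for all $n\ge0$. *)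

theory Defs
  imports "HOL-Library.Disjoint_Sets" "HOL-Computational_Algebra.Polynomial"
begin

definition set_partitions :: "nat \<Rightarrow> nat set set set" where
  "set_partitions n = {P. partition_on {1..n} P}"

text \<open>Order-preserving bijection of a finite set S of naturals onto {1..card S}.\<close>
definition st_map :: "nat set \<Rightarrow> nat \<Rightarrow> nat" where
  "st_map S x = card {y \<in> S. y < x} + 1"

definition st :: "nat set set \<Rightarrow> nat set set" where
  "st \<tau> = (\<lambda>B. st_map (\<Union>\<tau>) ` B) ` \<tau>"

definition subpartition :: "nat set set \<Rightarrow> nat set set \<Rightarrow> bool" where
  "subpartition \<tau> \<sigma> \<longleftrightarrow> partition_on (\<Union>\<tau>) \<tau> \<and>
     (\<exists>f. (\<forall>B\<in>\<tau>. f B \<in> \<sigma> \<and> B \<subseteq> f B) \<and> inj_on f \<tau>)"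

definition contains :: "nat set set \<Rightarrow> nat set set \<Rightarrow> bool" where
  "contains \<sigma> \<pi> \<longleftrightarrow> (\<exists>\<tau>. subpartition \<tau> \<sigma> \<and> st \<tau> = \<pi>)"

definition avoiders :: "nat \<Rightarrow> nat set set \<Rightarrow> nat set set set" where
  "avoiders n \<pi> = {\<sigma> \<in> set_partitions n. \<not> contains \<sigma> \<pi>}"

definition singletons_part :: "nat \<Rightarrow> nat set set" where
  "singletons_part m = (\<lambda>i. {i}) ` {1..m}"

definition oneblock_part :: "nat \<Rightarrow> nat set set" where
  "oneblock_part m = {{1..m}}"

definition pair_singletons_part :: "nat \<Rightarrow> nat set set" where
  "pair_singletons_part m = insert {1, 2} ((\<lambda>i. {i}) ` {3..m})"

definition P_recursive :: "(nat \<Rightarrow> real) \<Rightarrow> bool" where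
  "P_recursive a \<longleftrightarrow> (\<exists>(k::nat) (P :: nat \<Rightarrow> real poly).
      (\<exists>i\<le>k. P i \<noteq> 0) \<and>
      (\<forall>n. (\<Sum>i\<le>k. poly (P i) (real n) * a (n + i)) = 0))"

end

theory Submission
  imports Defs "HOL-Combinatorics.Stirling"
begin

text \<open>Each of these avoidance classes is described by a statistic that behaves simply when \<open>n + 1\<close>
  is added to a partition of \<open>{1..n}\<close>, either as a new singleton or to an existing block.
  A partition avoids \<open>1/2/\<dots>/m\<close> iff it has fewer than \<open>m\<close> blocks, so the count is a sum of
  Stirling numbers; it avoids \<open>12\<dots>m\<close> iff all blocks have fewer than \<open>m\<close> elements, which gives
  \<open>a (n + 1) = (\<Sum>i < m - 1. (n choose i) * a (n - i))\<close>, a recurrence with polynomial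
  coefficients. It contains \<open>12/3/\<dots>/m\<close> iff, for the least element \<open>b\<close> that is not the minimum
  of its block, at least \<open>m - 2\<close> blocks not containing \<open>b\<close> have an element above \<open>b\<close>;
  counting partitions by the number \<open>c\<close> of such blocks, weighted by \<open>u choose i\<close> where \<open>u\<close> is
  the number of blocks lying entirely below \<open>b\<close>, gives a closed system of first-order
  recurrences with constant coefficients. A partition avoids \<open>13/2\<close> iff its
  blocks are intervals, and \<open>1/23\<close> reduces to \<open>12/3\<close> by the reflection \<open>x \<mapsto> n + 1 - x\<close>.
  Sequences satisfying linear recurrences with constant coefficients are P-recursive.\<close>

section \<open>C-finite and P-recursive sequences\<close>

text \<open>\<open>shift_apply Q a\<close> is \<open>Q(E) a\<close> for the shift operator \<open>E a = (\<lambda>n. a (n + 1))\<close>.\<close>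

definition shift_apply :: "real poly \<Rightarrow> (nat \<Rightarrow> real) \<Rightarrow> nat \<Rightarrow> real" where
  "shift_apply Q a n = (\<Sum>i\<le>degree Q. coeff Q i * a (n + i))"

lemma shift_apply_degree_le:
  assumes "degree Q \<le> D"
  shows "shift_apply Q a n = (\<Sum>i\<le>D. coeff Q i * a (n + i))"
  unfolding shift_apply_def using assms
  by (intro sum.mono_neutral_left) (auto simp: coeff_eq_0)

lemma shift_apply_0 [simp]: "shift_apply 0 a n = 0"
  by (simp add: shift_apply_def)

lemma shift_apply_zero_seq [simp]: "shift_apply Q (\<lambda>_. 0) n = 0"
  by (simp add: shift_apply_def)

lemma shift_apply_add: "shift_apply (P + Q) a n = shift_apply P a n + shift_apply Q a n"
proof -
  let ?D = "max (degree P) (degree Q)"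
  have "degree (P + Q) \<le> ?D"
    by (rule degree_add_le) auto
  then show ?thesis
    by (simp add: shift_apply_degree_le[of _ ?D] algebra_simps sum.distrib)
qed

lemma shift_apply_smult: "shift_apply (smult c P) a n = c * shift_apply P a n"
  by (simp add: shift_apply_degree_le[of "smult c P" "degree P"] shift_apply_def
      sum_distrib_left mult.assoc)

lemma shift_apply_pCons: "shift_apply (pCons c Q) a n = c * a n + shift_apply Q a (Suc n)"
proof -
  have "shift_apply (pCons c Q) a n = (\<Sum>i\<le>Suc (degree Q). coeff (pCons c Q) i * a (n + i))"
    by (rule shift_apply_degree_le) (simp add: degree_pCons_le)
  also have "\<dots> = c * a n + (\<Sum>i\<le>degree Q. coeff Q i * a (Suc n + i))"
    by (subst sum.atMost_Suc_shift) simp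
  finally show ?thesis
    by (simp add: shift_apply_def)
qed

lemma shift_apply_mult: "shift_apply (P * Q) a n = shift_apply P (shift_apply Q a) n"
proof (induction P arbitrary: n)
  case (pCons c P)
  have "pCons c P * Q = smult c Q + pCons 0 (P * Q)"
    by simp
  then show ?case
    by (simp add: shift_apply_add shift_apply_smult shift_apply_pCons pCons.IH)
qed simp

lemma shift_apply_plus: "shift_apply Q (\<lambda>n. a n + b n) n = shift_apply Q a n + shift_apply Q b n"
  by (simp add: shift_apply_def algebra_simps sum.distrib)

lemma shift_apply_mult_const: "shift_apply Q (\<lambda>n. c * a n) n = c * shift_apply Q a n"
  by (simp add: shift_apply_def sum_distrib_left algebra_simps)

definition C_finite :: "(nat \<Rightarrow> real) \<Rightarrow> bool" where
  "C_finite a \<longleftrightarrow> (\<exists>Q. Q \<noteq> 0 \<and> (\<forall>n. shift_apply Q a n = 0))"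

lemma C_finite_zero: "C_finite (\<lambda>n. 0)"
  unfolding C_finite_def by (rule exI[of _ 1]) (simp add: shift_apply_def)

lemma C_finite_mult_const: "C_finite a \<Longrightarrow> C_finite (\<lambda>n. c * a n)"
  by (auto simp: C_finite_def shift_apply_mult_const)

lemma C_finite_add:
  assumes "C_finite a" "C_finite b"
  shows "C_finite (\<lambda>n. a n + b n)"
proof -
  obtain P where P: "P \<noteq> 0" "\<And>n. shift_apply P a n = 0"
    using assms(1) by (auto simp: C_finite_def)
  obtain Q where Q: "Q \<noteq> 0" "\<And>n. shift_apply Q b n = 0"
    using assms(2) by (auto simp: C_finite_def)
  have Pa: "shift_apply P a = (\<lambda>_. 0)" and Qb: "shift_apply Q b = (\<lambda>_. 0)"
    using P(2) Q(2) by auto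
  have "shift_apply (P * Q) a n = 0" for n
    unfolding mult.commute[of P Q] shift_apply_mult Pa by simp
  moreover have "shift_apply (P * Q) b n = 0" for n
    unfolding shift_apply_mult Qb by simp
  ultimately have "shift_apply (P * Q) (\<lambda>n. a n + b n) n = 0" for n
    by (simp add: shift_apply_plus)
  then show ?thesis
    unfolding C_finite_def using P(1) Q(1) by (intro exI[of _ "P * Q"]) simp
qed

lemma C_finite_sum: "(\<And>c. c \<in> A \<Longrightarrow> C_finite (f c)) \<Longrightarrow> C_finite (\<lambda>n. \<Sum>c\<in>A. f c n)"
  by (induction A rule: infinite_finite_induct) (auto intro: C_finite_add C_finite_zero)

text \<open>If \<open>Q\<close> annihilates \<open>g\<close>, then \<open>Q * (E - l)\<close> annihilates \<open>b\<close>.\<close>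

lemma C_finite_first_order:
  assumes "C_finite g" and rec: "\<And>n. b (Suc n) = l * b n + g n"
  shows "C_finite b"
proof -
  obtain Q where Q: "Q \<noteq> 0" "\<And>n. shift_apply Q g n = 0"
    using assms(1) by (auto simp: C_finite_def)
  have "shift_apply [:-l, 1:] b = g"
    by (rule ext) (simp add: shift_apply_pCons rec)
  then have "shift_apply (Q * [:-l, 1:]) b n = 0" for n
    unfolding shift_apply_mult by (simp add: Q(2))
  moreover have "Q * [:-l, 1:] \<noteq> 0"
    using Q(1) by (metis mult_eq_0_iff pCons_eq_0_iff zero_neq_one)
  ultimately show ?thesis
    unfolding C_finite_def by blast
qed

lemma C_finite_const: "C_finite (\<lambda>n. c)"
  by (rule C_finite_first_order[OF C_finite_zero, of _ 1]) simp

lemma C_finite_binomial: "C_finite (\<lambda>n. real (n choose i))"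
proof (induction i)
  case (Suc i)
  show ?case
    by (rule C_finite_first_order[OF Suc, of _ 1]) simp
qed (simp add: C_finite_const)

lemma C_finite_imp_P_recursive:
  assumes "C_finite a"
  shows "P_recursive a"
proof -
  obtain Q where Q: "Q \<noteq> 0" "\<And>n. shift_apply Q a n = 0"
    using assms by (auto simp: C_finite_def)
  have "\<exists>i\<le>degree Q. [:coeff Q i:] \<noteq> 0"
    using Q(1) by (intro exI[of _ "degree Q"]) simp
  moreover have "\<forall>n. (\<Sum>i\<le>degree Q. poly [:coeff Q i:] (real n) * a (n + i)) = 0"
    using Q(2) by (simp add: shift_apply_def)
  ultimately show ?thesis
    unfolding P_recursive_def by (intro exI[of _ "degree Q"] exI[of _ "\<lambda>i. [:coeff Q i:]"]) simp
qed

lemma P_recursive_if_recurrence: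
  assumes coeffs: "\<And>i. i < k \<Longrightarrow> \<exists>p. \<forall>n. poly p (real n) = c i n"
    and rec: "\<And>n. a (n + k) = (\<Sum>i<k. c i n * a (n + i))"
  shows "P_recursive a"
proof -
  have "\<forall>i. \<exists>p. i < k \<longrightarrow> (\<forall>n. poly p (real n) = c i n)"
    using coeffs by blast
  then obtain p where p: "\<And>i n. i < k \<Longrightarrow> poly (p i) (real n) = c i n"
    by (metis choice)
  define P where "P i = (if i = k then 1 else - p i)" for i
  have "(\<Sum>i\<le>k. poly (P i) (real n) * a (n + i)) = a (n + k) - (\<Sum>i<k. c i n * a (n + i))" for n
  proof -
    have "{..k} = insert k {..<k}"
      by auto
    moreover have "(\<Sum>i<k. poly (P i) (real n) * a (n + i)) = (\<Sum>i<k. - (c i n * a (n + i)))"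
      by (rule sum.cong) (simp_all add: P_def p)
    ultimately show ?thesis
      by (simp add: P_def sum_negf)
  qed
  then have "(\<Sum>i\<le>k. poly (P i) (real n) * a (n + i)) = 0" for n
    using rec[of n] by simp
  moreover have "P k \<noteq> 0"
    by (simp add: P_def)
  ultimately show ?thesis
    unfolding P_recursive_def by (intro exI[of _ k] exI[of _ P]) auto
qed

lemma ex_poly_binomial: "\<exists>p. \<forall>n. poly p (real n) = real ((n + c) choose i)"
proof
  let ?p = "smult (1 / fact i) (\<Prod>t<i. [:real c - real t, 1:])"
  show "\<forall>n. poly ?p (real n) = real ((n + c) choose i)"
  proof
    fix n
    have "real ((n + c) choose i) = (\<Prod>t<i. real (n + c) - real t) / fact i"
      by (simp add: binomial_gbinomial gbinomial_prod_rev atLeast0LessThan)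
    then show "poly ?p (real n) = real ((n + c) choose i)"
      by (simp add: poly_prod algebra_simps)
  qed
qed

section \<open>Standardization and subpartitions\<close>

lemma st_map_less:
  assumes "finite S" "x \<in> S" "y \<in> S" "x < y"
  shows "st_map S x < st_map S y"
proof -
  have "{z\<in>S. z < x} \<subset> {z\<in>S. z < y}"
    using assms by auto
  then show ?thesis
    using assms(1) by (simp add: st_map_def psubset_card_mono)
qed

lemma st_map_less_iff:
  assumes "finite S" "x \<in> S" "y \<in> S"
  shows "st_map S x < st_map S y \<longleftrightarrow> x < y"
  using st_map_less[OF assms] st_map_less[OF assms(1,3,2)]
  by (metis less_asym' linorder_neqE_nat)

lemma inj_on_st_map: "finite S \<Longrightarrow> inj_on (st_map S) S"
  unfolding inj_on_def using st_map_less by (metis less_irrefl linorder_neqE_nat)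

lemma st_map_image:
  assumes "finite S"
  shows "st_map S ` S = {1..card S}"
proof -
  have "st_map S x \<in> {1..card S}" if "x \<in> S" for x
  proof -
    have "{z\<in>S. z < x} \<subset> S"
      using that by auto
    then have "card {z\<in>S. z < x} < card S"
      using assms by (intro psubset_card_mono) auto
    then show ?thesis
      by (simp add: st_map_def)
  qed
  moreover have "card (st_map S ` S) = card S"
    using inj_on_st_map[OF assms] by (rule card_image)
  ultimately show ?thesis
    by (intro card_subset_eq) auto
qed

lemma Union_st: "\<Union>(st \<tau>) = st_map (\<Union>\<tau>) ` \<Union>\<tau>"
  by (auto simp: st_def)

lemma inj_on_image_st_map: "finite (\<Union>\<tau>) \<Longrightarrow> inj_on ((`) (st_map (\<Union>\<tau>))) \<tau>"
  by (rule inj_onI) (use inj_on_image_eq_iff[OF inj_on_st_map] in blast)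

lemma card_st: "finite (\<Union>\<tau>) \<Longrightarrow> card (st \<tau>) = card \<tau>"
  unfolding st_def by (rule card_image[OF inj_on_image_st_map])

lemma st_singletons:
  assumes "finite S"
  shows "st ((\<lambda>x. {x}) ` S) = singletons_part (card S)"
proof -
  have "st ((\<lambda>x. {x}) ` S) = (\<lambda>i. {i}) ` st_map S ` S"
    by (auto simp: st_def)
  then show ?thesis
    by (simp add: st_map_image[OF assms] singletons_part_def)
qed

lemma st_single_block: "finite T \<Longrightarrow> st {T} = {{1..card T}}"
  by (simp add: st_def st_map_image)

lemma set_partitions_iff:
  "\<sigma> \<in> set_partitions n \<longleftrightarrow>
     \<Union>\<sigma> = {1..n} \<and> (\<forall>A\<in>\<sigma>. \<forall>B\<in>\<sigma>. A \<noteq> B \<longrightarrow> A \<inter> B = {}) \<and> {} \<notin> \<sigma>"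
  by (simp add: set_partitions_def partition_on_def disjoint_def)

lemma set_partitions_block_subset: "\<sigma> \<in> set_partitions n \<Longrightarrow> B \<in> \<sigma> \<Longrightarrow> B \<subseteq> {1..n}"
  by (auto simp: set_partitions_iff)

lemma set_partitions_block_nonempty: "\<sigma> \<in> set_partitions n \<Longrightarrow> B \<in> \<sigma> \<Longrightarrow> B \<noteq> {}"
  by (auto simp: set_partitions_iff)

lemma set_partitions_block_eq:
  "\<sigma> \<in> set_partitions n \<Longrightarrow> A \<in> \<sigma> \<Longrightarrow> B \<in> \<sigma> \<Longrightarrow> x \<in> A \<Longrightarrow> x \<in> B \<Longrightarrow> A = B"
  by (auto simp: set_partitions_iff)

lemma finite_set_partitions: "finite (set_partitions n)"
proof (rule finite_subset)
  show "set_partitions n \<subseteq> Pow (Pow {1..n})"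
    using set_partitions_block_subset by blast
qed simp

lemma set_partitions_finite: "\<sigma> \<in> set_partitions n \<Longrightarrow> finite \<sigma>"
  by (metis finite_UnionD finite_atLeastAtMost set_partitions_iff)

lemma subpartitionI:
  assumes "partition_on (\<Union>\<tau>) \<tau>"
    and "\<And>T. T \<in> \<tau> \<Longrightarrow> \<exists>D\<in>\<sigma>. T \<subseteq> D"
    and "\<And>T1 T2 D. T1 \<in> \<tau> \<Longrightarrow> T2 \<in> \<tau> \<Longrightarrow> D \<in> \<sigma> \<Longrightarrow> T1 \<subseteq> D \<Longrightarrow> T2 \<subseteq> D \<Longrightarrow> T1 = T2"
  shows "subpartition \<tau> \<sigma>"
proof -
  obtain f where f: "\<And>T. T \<in> \<tau> \<Longrightarrow> f T \<in> \<sigma> \<and> T \<subseteq> f T"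
    using assms(2) by metis
  have "inj_on f \<tau>"
    by (rule inj_onI) (use f assms(3) in metis)
  then show ?thesis
    unfolding subpartition_def using assms(1) f by blast
qed

lemma subpartition_Union_subset:
  assumes "subpartition \<tau> \<sigma>" "\<sigma> \<in> set_partitions n"
  shows "\<Union>\<tau> \<subseteq> {1..n}"
proof
  fix x
  assume "x \<in> \<Union>\<tau>"
  then obtain T where "T \<in> \<tau>" "x \<in> T"
    by blast
  moreover obtain f where "\<forall>B\<in>\<tau>. f B \<in> \<sigma> \<and> B \<subseteq> f B"
    using assms(1) by (auto simp: subpartition_def)
  ultimately show "x \<in> {1..n}"
    using set_partitions_block_subset[OF assms(2)] by blast
qed

lemma subpartition_finite:
  "subpartition \<tau> \<sigma> \<Longrightarrow> \<sigma> \<in> set_partitions n \<Longrightarrow> finite (\<Union>\<tau>)"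
  by (meson finite_atLeastAtMost finite_subset subpartition_Union_subset)

section \<open>Growing partitions of \<open>{1..n}\<close> to partitions of \<open>{1..n+1}\<close>\<close>

text \<open>Every partition of \<open>{1..n+1}\<close> arises in exactly one way from a partition of
  \<open>{1..n}\<close>, by adding \<open>n+1\<close> either as a new singleton block or to an existing block.\<close>

definition add_singleton :: "nat \<Rightarrow> nat set set \<Rightarrow> nat set set" where
  "add_singleton n \<sigma> = insert {Suc n} \<sigma>"

definition add_to_block :: "nat \<Rightarrow> nat set set \<Rightarrow> nat set \<Rightarrow> nat set set" where
  "add_to_block n \<sigma> C = insert (insert (Suc n) C) (\<sigma> - {C})"

definition restrict_partition :: "nat \<Rightarrow> nat set set \<Rightarrow> nat set set" where
  "restrict_partition n \<rho> = (\<inter>) {1..n} ` \<rho> - {{}}"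

lemma Suc_notin_block: "\<sigma> \<in> set_partitions n \<Longrightarrow> B \<in> \<sigma> \<Longrightarrow> Suc n \<notin> B"
  using set_partitions_block_subset by fastforce

lemma add_singleton_in_set_partitions:
  "\<sigma> \<in> set_partitions n \<Longrightarrow> add_singleton n \<sigma> \<in> set_partitions (Suc n)"
  using Suc_notin_block unfolding set_partitions_iff add_singleton_def
  by (auto simp: atLeastAtMostSuc_conv)

lemma add_to_block_in_set_partitions:
  "\<sigma> \<in> set_partitions n \<Longrightarrow> C \<in> \<sigma> \<Longrightarrow> add_to_block n \<sigma> C \<in> set_partitions (Suc n)"
  using Suc_notin_block unfolding set_partitions_iff add_to_block_def
  by (auto simp: atLeastAtMostSuc_conv) blast+

lemma restrict_partition_id:
  assumes "\<sigma> \<in> set_partitions n"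
  shows "restrict_partition n \<sigma> = \<sigma>"
proof -
  have "(\<inter>) {1..n} ` \<sigma> = (\<lambda>B. B) ` \<sigma>"
    by (rule image_cong[OF refl]) (use set_partitions_block_subset[OF assms] in blast)
  then show ?thesis
    using assms by (auto simp: restrict_partition_def set_partitions_iff)
qed

lemma restrict_add_singleton:
  "\<sigma> \<in> set_partitions n \<Longrightarrow> restrict_partition n (add_singleton n \<sigma>) = \<sigma>"
  using restrict_partition_id[of \<sigma> n]
  by (auto simp: restrict_partition_def add_singleton_def)

lemma restrict_add_to_block:
  assumes "\<sigma> \<in> set_partitions n" "C \<in> \<sigma>"
  shows "restrict_partition n (add_to_block n \<sigma> C) = \<sigma>"
proof -
  have "{1..n} \<inter> insert (Suc n) C = {1..n} \<inter> C"
    by auto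
  then have "restrict_partition n (add_to_block n \<sigma> C) = restrict_partition n \<sigma>"
    using assms(2) by (auto simp: restrict_partition_def add_to_block_def)
  then show ?thesis
    using restrict_partition_id[OF assms(1)] by simp
qed

lemma add_singleton_ne_add_to_block:
  assumes "\<sigma> \<in> set_partitions n" "C \<in> \<sigma>"
  shows "add_singleton n \<sigma> \<noteq> add_to_block n \<sigma> C"
proof
  assume "add_singleton n \<sigma> = add_to_block n \<sigma> C"
  then have "{Suc n} \<in> add_to_block n \<sigma> C"
    by (metis add_singleton_def insertI1)
  then have "{Suc n} = insert (Suc n) C"
    using Suc_notin_block[OF assms(1)] by (auto simp: add_to_block_def)
  then show False
    using set_partitions_block_nonempty[OF assms] Suc_notin_block[OF assms] by auto
qed

lemma inj_on_add_to_block: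
  assumes "\<sigma> \<in> set_partitions n"
  shows "inj_on (add_to_block n \<sigma>) \<sigma>"
proof (rule inj_onI)
  fix C D
  assume CD: "C \<in> \<sigma>" "D \<in> \<sigma>" "add_to_block n \<sigma> C = add_to_block n \<sigma> D"
  then have "insert (Suc n) C \<in> add_to_block n \<sigma> D"
    by (metis add_to_block_def insertI1)
  moreover have "insert (Suc n) C \<notin> \<sigma>"
    using Suc_notin_block[OF assms] by blast
  ultimately have "insert (Suc n) C = insert (Suc n) D"
    by (auto simp: add_to_block_def)
  then show "C = D"
    using Suc_notin_block[OF assms] CD by (metis insert_ident)
qed

lemma restrict_partition_in_set_partitions:
  "\<rho> \<in> set_partitions (Suc n) \<Longrightarrow> restrict_partition n \<rho> \<in> set_partitions n"
  using partition_on_restrict[of "{1..Suc n}" \<rho> "{1..n}"]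
  by (simp add: restrict_partition_def set_partitions_def Int_absorb2)

lemma restrict_partition_Suc:
  assumes \<rho>: "\<rho> \<in> set_partitions (Suc n)" and R: "R \<in> \<rho>" "Suc n \<in> R"
  shows "restrict_partition n \<rho> = insert (R - {Suc n}) (\<rho> - {R}) - {{}}"
proof -
  have "{1..n} \<inter> B = B" if "B \<in> \<rho>" "B \<noteq> R" for B
  proof -
    have "B \<subseteq> {1..Suc n}" "Suc n \<notin> B"
      using \<rho> that R by (auto simp: set_partitions_iff)
    then show ?thesis
      by (auto simp: atLeastAtMostSuc_conv)
  qed
  then have "(\<inter>) {1..n} ` (\<rho> - {R}) = (\<lambda>B. B) ` (\<rho> - {R})"
    by (intro image_cong) blast+
  moreover have "\<rho> = insert R (\<rho> - {R})" "{1..n} \<inter> R = R - {Suc n}"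
    using R set_partitions_block_subset[OF \<rho> R(1)] by (auto simp: atLeastAtMostSuc_conv)
  ultimately show ?thesis
    unfolding restrict_partition_def by (metis image_ident image_insert)
qed

lemma set_partitions_Suc_cases:
  assumes \<rho>: "\<rho> \<in> set_partitions (Suc n)"
  obtains \<sigma> where "\<sigma> \<in> set_partitions n" "\<rho> = add_singleton n \<sigma>"
  | \<sigma> C where "\<sigma> \<in> set_partitions n" "C \<in> \<sigma>" "\<rho> = add_to_block n \<sigma> C"
proof -
  have "Suc n \<in> \<Union>\<rho>"
    using \<rho> by (simp add: set_partitions_iff)
  then obtain R where R: "R \<in> \<rho>" "Suc n \<in> R"
    by blast
  note restrict = restrict_partition_Suc[OF \<rho> R] restrict_partition_in_set_partitions[OF \<rho>]
  have "{} \<notin> \<rho>"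
    using \<rho> by (simp add: set_partitions_iff)
  show thesis
  proof (cases "R = {Suc n}")
    case True
    then have "restrict_partition n \<rho> = \<rho> - {R}"
      using restrict \<open>{} \<notin> \<rho>\<close> by auto
    then show thesis
      using that(1) restrict R True by (auto simp: add_singleton_def)
  next
    case False
    define C where "C = R - {Suc n}"
    have "C \<noteq> {}" "R = insert (Suc n) C"
      using False R by (auto simp: C_def)
    moreover have "C \<notin> \<rho>"
    proof
      assume "C \<in> \<rho>"
      moreover obtain x where "x \<in> C"
        using \<open>C \<noteq> {}\<close> by blast
      ultimately have "C = R"
        using set_partitions_block_eq[OF \<rho> _ R(1)] by (auto simp: C_def)
      then show False
        using R(2) by (auto simp: C_def)
    qed
    moreover have "restrict_partition n \<rho> = insert C (\<rho> - {R})"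
      using restrict \<open>{} \<notin> \<rho>\<close> \<open>C \<noteq> {}\<close> by (auto simp: C_def)
    ultimately show thesis
      using that(2) restrict R by (auto simp: add_to_block_def insert_absorb)
  qed
qed

abbreviation extensions_sum :: "(nat set set \<Rightarrow> 'a::comm_monoid_add) \<Rightarrow> nat \<Rightarrow> nat set set \<Rightarrow> 'a" where
  "extensions_sum h n \<sigma> \<equiv> h (add_singleton n \<sigma>) + (\<Sum>C\<in>\<sigma>. h (add_to_block n \<sigma> C))"

lemma sum_set_partitions_Suc:
  "(\<Sum>\<rho>\<in>set_partitions (Suc n). h \<rho>) = (\<Sum>\<sigma>\<in>set_partitions n. extensions_sum h n \<sigma>)"
proof -
  define ext where "ext \<sigma> = insert (add_singleton n \<sigma>) (add_to_block n \<sigma> ` \<sigma>)" for \<sigma>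
  have "set_partitions (Suc n) = (\<Union>\<sigma>\<in>set_partitions n. ext \<sigma>)"
  proof
    show "set_partitions (Suc n) \<subseteq> (\<Union>\<sigma>\<in>set_partitions n. ext \<sigma>)"
    proof
      fix \<rho>
      assume "\<rho> \<in> set_partitions (Suc n)"
      then show "\<rho> \<in> (\<Union>\<sigma>\<in>set_partitions n. ext \<sigma>)"
        by (cases rule: set_partitions_Suc_cases) (auto simp: ext_def)
    qed
    show "(\<Union>\<sigma>\<in>set_partitions n. ext \<sigma>) \<subseteq> set_partitions (Suc n)"
      by (auto simp: ext_def add_singleton_in_set_partitions add_to_block_in_set_partitions)
  qed
  moreover have "restrict_partition n \<rho> = \<sigma>" if "\<sigma> \<in> set_partitions n" "\<rho> \<in> ext \<sigma>" for \<rho> \<sigma>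
    using that restrict_add_singleton restrict_add_to_block by (auto simp: ext_def)
  then have "ext \<sigma> \<inter> ext \<sigma>' = {}"
    if "\<sigma> \<in> set_partitions n" "\<sigma>' \<in> set_partitions n" "\<sigma> \<noteq> \<sigma>'" for \<sigma> \<sigma>'
    using that by blast
  moreover have "finite (ext \<sigma>)" if "\<sigma> \<in> set_partitions n" for \<sigma>
    using that by (simp add: ext_def set_partitions_finite)
  ultimately have "(\<Sum>\<rho>\<in>set_partitions (Suc n). h \<rho>) = (\<Sum>\<sigma>\<in>set_partitions n. sum h (ext \<sigma>))"
    by (simp add: sum.UNION_disjoint finite_set_partitions)
  also have "\<dots> = (\<Sum>\<sigma>\<in>set_partitions n. h (add_singleton n \<sigma>) + (\<Sum>C\<in>\<sigma>. h (add_to_block n \<sigma> C)))"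
  proof (rule sum.cong[OF refl])
    fix \<sigma>
    assume \<sigma>: "\<sigma> \<in> set_partitions n"
    then have "add_singleton n \<sigma> \<notin> add_to_block n \<sigma> ` \<sigma>"
      using add_singleton_ne_add_to_block by fastforce
    then show "sum h (ext \<sigma>) = h (add_singleton n \<sigma>) + (\<Sum>C\<in>\<sigma>. h (add_to_block n \<sigma> C))"
      using \<sigma> by (simp add: ext_def set_partitions_finite sum.reindex inj_on_add_to_block)
  qed
  finally show ?thesis .
qed

lemma card_add_singleton:
  assumes "\<sigma> \<in> set_partitions n"
  shows "card (add_singleton n \<sigma>) = Suc (card \<sigma>)"
proof -
  have "{Suc n} \<notin> \<sigma>"
    using Suc_notin_block[OF assms] by blast
  then show ?thesis
    by (simp add: add_singleton_def set_partitions_finite[OF assms])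
qed

lemma card_add_to_block:
  assumes "\<sigma> \<in> set_partitions n" "C \<in> \<sigma>"
  shows "card (add_to_block n \<sigma> C) = card \<sigma>"
proof -
  have "insert (Suc n) C \<notin> \<sigma>"
    using Suc_notin_block[OF assms(1)] by blast
  then have "card (add_to_block n \<sigma> C) = Suc (card (\<sigma> - {C}))"
    using set_partitions_finite[OF assms(1)] by (simp add: add_to_block_def)
  then show ?thesis
    using assms(2) set_partitions_finite[OF assms(1)] by (simp only: card_Suc_Diff1)
qed

section \<open>The pattern \<open>1/2/\<dots>/m\<close>\<close>

lemma of_nat_card_set_partitions_filter:
  "of_nat (card {\<sigma>\<in>set_partitions n. P \<sigma>}) = (\<Sum>\<sigma>\<in>set_partitions n. of_bool (P \<sigma>))"
  by (simp add: finite_set_partitions Int_def)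

lemma set_partitions_0: "set_partitions 0 = {{}}"
  by (simp add: set_partitions_def partition_on_empty)

theorem card_set_partitions_Stirling:
  "card {\<sigma>\<in>set_partitions n. card \<sigma> = k} = Stirling n k"
proof (induction n arbitrary: k)
  case 0
  have "{\<sigma>\<in>set_partitions 0. card \<sigma> = k} = (if k = 0 then {{}} else {})"
    by (auto simp: set_partitions_0)
  then show ?case
    by (simp only:) (cases k, simp_all)
next
  case (Suc n)
  have "card {\<rho>\<in>set_partitions (Suc n). card \<rho> = k} =
      (\<Sum>\<sigma>\<in>set_partitions n. of_bool (card (add_singleton n \<sigma>) = k)
          + (\<Sum>C\<in>\<sigma>. of_bool (card (add_to_block n \<sigma> C) = k)))"
    by (simp only: of_nat_card_set_partitions_filter[where 'a = nat, simplified]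
        sum_set_partitions_Suc)
  also have "\<dots> = (\<Sum>\<sigma>\<in>set_partitions n. of_bool (Suc (card \<sigma>) = k) + k * of_bool (card \<sigma> = k))"
    by (intro sum.cong) (auto simp: card_add_singleton card_add_to_block)
  also have "\<dots> = card {\<sigma>\<in>set_partitions n. Suc (card \<sigma>) = k} + k * Stirling n k"
    by (simp add: sum.distrib sum_distrib_left Suc.IH[symmetric]
        of_nat_card_set_partitions_filter[where 'a = nat, simplified])
  also have "\<dots> = Stirling (Suc n) k"
    using Suc.IH by (cases k) auto
  finally show ?case .
qed

lemma contains_singletons_part_iff:
  assumes \<sigma>: "\<sigma> \<in> set_partitions n"
  shows "contains \<sigma> (singletons_part m) \<longleftrightarrow> m \<le> card \<sigma>"
proof
  assume "contains \<sigma> (singletons_part m)"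
  then obtain \<tau> f where \<tau>: "subpartition \<tau> \<sigma>" "st \<tau> = singletons_part m"
    and f: "\<forall>B\<in>\<tau>. f B \<in> \<sigma> \<and> B \<subseteq> f B" "inj_on f \<tau>"
    by (auto simp: contains_def subpartition_def)
  have "card (singletons_part m) = m"
    by (simp add: singletons_part_def card_image)
  moreover have "card (st \<tau>) = card \<tau>"
    using subpartition_finite[OF \<tau>(1) \<sigma>] by (rule card_st)
  moreover have "card \<tau> \<le> card \<sigma>"
    using f set_partitions_finite[OF \<sigma>] by (intro card_inj_on_le[of f]) auto
  ultimately show "m \<le> card \<sigma>"
    using \<tau>(2) by simp
next
  assume "m \<le> card \<sigma>"
  then obtain \<sigma>' where \<sigma>': "\<sigma>' \<subseteq> \<sigma>" "card \<sigma>' = m" "finite \<sigma>'"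
    by (rule obtain_subset_with_card_n)
  define z where "z B = (SOME x. x \<in> B)" for B :: "nat set"
  have z: "z B \<in> B" if "B \<in> \<sigma>" for B
    using set_partitions_block_nonempty[OF \<sigma> that] unfolding z_def by (simp add: some_in_eq)
  have "inj_on z \<sigma>'"
    by (rule inj_onI) (metis z set_partitions_block_eq[OF \<sigma>] \<sigma>'(1) subsetD)
  define S where "S = z ` \<sigma>'"
  have S: "card S = m" "finite S"
    using \<open>inj_on z \<sigma>'\<close> \<sigma>' by (simp_all add: S_def card_image)
  define \<tau> where "\<tau> = (\<lambda>x. {x}) ` S"
  have "subpartition \<tau> \<sigma>"
  proof (rule subpartitionI)
    show "partition_on (\<Union>\<tau>) \<tau>"
      using partition_on_singletons[of S] by (simp add: \<tau>_def)
    show "\<exists>D\<in>\<sigma>. T \<subseteq> D" if "T \<in> \<tau>" for T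
      using that z \<sigma>'(1) by (auto simp: \<tau>_def S_def)
    show "T1 = T2" if "T1 \<in> \<tau>" "T2 \<in> \<tau>" "D \<in> \<sigma>" "T1 \<subseteq> D" "T2 \<subseteq> D" for T1 T2 D
      using that z \<sigma>'(1) set_partitions_block_eq[OF \<sigma>] unfolding \<tau>_def S_def
      by (smt (verit) image_iff insert_subset subsetD)
  qed
  moreover have "st \<tau> = singletons_part m"
    using st_singletons[OF S(2)] S(1) by (simp add: \<tau>_def)
  ultimately show "contains \<sigma> (singletons_part m)"
    by (auto simp: contains_def)
qed

lemma C_finite_Stirling: "C_finite (\<lambda>n. real (Stirling n k))"
proof (induction k)
  case 0
  show ?case
    by (rule C_finite_first_order[OF C_finite_zero, of _ 0]) simp
next
  case (Suc k)
  show ?case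
    by (rule C_finite_first_order[OF Suc, of _ "real (Suc k)"]) (simp add: algebra_simps)
qed

theorem P_recursive_avoiders_singletons_part:
  "P_recursive (\<lambda>n. real (card (avoiders n (singletons_part m))))"
proof -
  have "real (card (avoiders n (singletons_part m))) = (\<Sum>k<m. real (Stirling n k))" for n
  proof -
    have "real (card (avoiders n (singletons_part m))) =
        (\<Sum>\<sigma>\<in>set_partitions n. of_bool (card \<sigma> < m))"
      unfolding avoiders_def of_nat_card_set_partitions_filter[symmetric]
      by (metis (mono_tags) contains_singletons_part_iff not_le)
    also have "\<dots> = (\<Sum>\<sigma>\<in>set_partitions n. \<Sum>k<m. of_bool (card \<sigma> = k))"
      by (intro sum.cong) auto
    also have "\<dots> = (\<Sum>k<m. real (Stirling n k))"
      by (subst sum.swap) (simp add: card_set_partitions_Stirling[symmetric]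
          of_nat_card_set_partitions_filter)
    finally show ?thesis .
  qed
  then show ?thesis
    by (simp add: C_finite_imp_P_recursive C_finite_sum C_finite_Stirling)
qed

section \<open>The pattern \<open>12\<dots>m\<close>\<close>

definition small_block_partitions :: "nat \<Rightarrow> 'a set \<Rightarrow> 'a set set set" where
  "small_block_partitions m A = {P. partition_on A P \<and> (\<forall>B\<in>P. card B < m)}"

lemma finite_small_block_partitions: "finite A \<Longrightarrow> finite (small_block_partitions m A)"
  unfolding small_block_partitions_def
  by (rule finite_subset[OF _ finitely_many_partition_on]) auto

lemma small_block_partitions_insert:
  assumes "finite A" "x \<notin> A"
  shows "small_block_partitions m (insert x A) =
    (\<Union>S\<in>{S. S \<subseteq> A \<and> card S < m - 1}. insert (insert x S) ` small_block_partitions m (A - S))"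
    (is "?L = ?R")
proof
  show "?L \<subseteq> ?R"
  proof
    fix Q
    assume "Q \<in> ?L"
    then have Q: "partition_on (insert x A) Q" "\<forall>B\<in>Q. card B < m"
      by (auto simp: small_block_partitions_def)
    then obtain R where R: "R \<in> Q" "x \<in> R"
      by (auto simp: partition_on_def)
    define S where "S = R - {x}"
    have RS: "R = insert x S" "x \<notin> S"
      using R by (auto simp: S_def)
    have "S \<subseteq> A"
      using Q(1) R by (auto simp: S_def partition_on_def)
    moreover have "card S < m - 1"
      using Q(2) R RS finite_subset[OF \<open>S \<subseteq> A\<close> assms(1)] by fastforce
    moreover have "partition_on (A - S) (Q - {R})"
    proof -
      have "disjnt R (\<Union>(Q - {R}))"
        using partition_onD2[OF Q(1)] R(1) by (auto simp: disjnt_def disjoint_def)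
      moreover have "insert R (Q - {R}) = Q"
        using R(1) by blast
      ultimately have "partition_on (insert x A - R) (Q - {R})"
        using partition_on_insert[of R "Q - {R}" "insert x A"] Q(1) by simp
      moreover have "insert x A - R = A - S"
        using RS assms(2) by auto
      ultimately show ?thesis
        by simp
    qed
    moreover have "Q = insert (insert x S) (Q - {R})"
      using R RS by auto
    ultimately show "Q \<in> ?R"
      using Q(2) by (auto simp: small_block_partitions_def)
  qed
  show "?R \<subseteq> ?L"
  proof
    fix Q
    assume "Q \<in> ?R"
    then obtain S P where S: "S \<subseteq> A" "card S < m - 1"
      and P: "partition_on (A - S) P" "\<forall>B\<in>P. card B < m" and Q: "Q = insert (insert x S) P"
      by (auto simp: small_block_partitions_def)
    have "disjnt (insert x S) (\<Union>P)"
      using P assms(2) by (auto simp: partition_on_def disjnt_def)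
    then have "partition_on (insert x A) Q"
      unfolding Q using P S assms(2) by (subst partition_on_insert) (auto simp: Diff_insert2[symmetric])
    moreover have "card (insert x S) = Suc (card S)"
      using S(1) assms finite_subset[OF S(1)] by (auto intro: card_insert_disjoint)
    then have "card (insert x S) < m"
      using S(2) by simp
    ultimately show "Q \<in> ?L"
      using P Q by (auto simp: small_block_partitions_def)
  qed
qed

lemma card_small_block_partitions_insert:
  assumes "finite A" "x \<notin> A"
  shows "card (small_block_partitions m (insert x A)) =
    (\<Sum>S\<in>{S. S \<subseteq> A \<and> card S < m - 1}. card (small_block_partitions m (A - S)))"
proof -
  have "card (insert (insert x S) ` small_block_partitions m (A - S)) = card (small_block_partitions m (A - S))"
    for S
  proof (rule card_image)
    have "insert x S \<notin> P" if "P \<in> small_block_partitions m (A - S)" for P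
      using that assms(2) by (auto simp: small_block_partitions_def partition_on_def)
    then show "inj_on (insert (insert x S)) (small_block_partitions m (A - S))"
      by (intro inj_onI) (metis insert_ident)
  qed
  moreover have "insert (insert x S) ` small_block_partitions m (A - S) \<inter>
      insert (insert x S') ` small_block_partitions m (A - S') = {}"
    if "S \<subseteq> A" "S' \<subseteq> A" "S \<noteq> S'" for S S'
  proof -
    have "insert x S \<notin> P" if "P \<in> small_block_partitions m (A - S')" for P
      using that assms(2) by (auto simp: small_block_partitions_def partition_on_def)
    moreover have "insert x S \<noteq> insert x S'"
      using that assms(2) by (metis insert_ident subsetD)
    ultimately show ?thesis
      by blast
  qed
  ultimately show ?thesis
    unfolding small_block_partitions_insert[OF assms] using assms(1)
    by (subst card_UN_disjoint) (auto intro!: finite_small_block_partitions)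
qed

lemma sum_subsets_card_less:
  assumes "finite A"
  shows "(\<Sum>S\<in>{S. S \<subseteq> A \<and> card S < k}. h (card S)) = (\<Sum>i<k. (card A choose i) * h i)"
proof -
  have "{S. S \<subseteq> A \<and> card S < k} = (\<Union>i<k. {S. S \<subseteq> A \<and> card S = i})"
    by auto
  then have "(\<Sum>S\<in>{S. S \<subseteq> A \<and> card S < k}. h (card S)) =
      (\<Sum>i<k. \<Sum>S\<in>{S. S \<subseteq> A \<and> card S = i}. h (card S))"
    using assms by (simp only:) (intro sum.UNION_disjoint, auto)
  also have "\<dots> = (\<Sum>i<k. \<Sum>S\<in>{S. S \<subseteq> A \<and> card S = i}. h i)"
    by (intro sum.cong) auto
  also have "\<dots> = (\<Sum>i<k. (card A choose i) * h i)"
    using n_subsets[OF assms] by simp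
  finally show ?thesis .
qed

lemma card_small_block_partitions_eq:
  fixes A :: "nat set"
  shows "finite A \<Longrightarrow> card (small_block_partitions m A) = card (small_block_partitions m {1..card A})"
proof (induction "card A" arbitrary: A rule: less_induct)
  case less
  have rec: "card (small_block_partitions m (insert y B)) =
      (\<Sum>i<m - 1. (card B choose i) * card (small_block_partitions m {1..card B - i}))"
    if "finite B" "y \<notin> B" "card B < card A" for y :: nat and B
  proof -
    have "card (small_block_partitions m (insert y B)) =
        (\<Sum>S\<in>{S. S \<subseteq> B \<and> card S < m - 1}. card (small_block_partitions m (B - S)))"
      by (rule card_small_block_partitions_insert[OF that(1,2)])
    also have "\<dots> = (\<Sum>S\<in>{S. S \<subseteq> B \<and> card S < m - 1}.
        card (small_block_partitions m {1..card B - card S}))"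
    proof (rule sum.cong[OF refl])
      fix S
      assume "S \<in> {S. S \<subseteq> B \<and> card S < m - 1}"
      then have "S \<subseteq> B"
        by simp
      then have "card (B - S) = card B - card S"
        using card_Diff_subset[OF finite_subset] \<open>finite B\<close> by blast
      then show "card (small_block_partitions m (B - S)) = card (small_block_partitions m {1..card B - card S})"
        using less.hyps[of "B - S"] \<open>finite B\<close> \<open>card B < card A\<close> by simp
    qed
    also have "\<dots> = (\<Sum>i<m - 1. (card B choose i) * card (small_block_partitions m {1..card B - i}))"
      by (rule sum_subsets_card_less[OF that(1)])
    finally show ?thesis .
  qed
  show ?case
  proof (cases "A = {}")
    case False
    then obtain x A' where A: "A = insert x A'" "x \<notin> A'"
      by (metis Set.set_insert ex_in_conv)
    have "finite A'" "card A = Suc (card A')"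
      using less.prems A by auto
    moreover have "{1..Suc (card A')} = insert (Suc (card A')) {1..card A'}"
      by auto
    ultimately show ?thesis
      using rec[of A' x] rec[of "{1..card A'}" "Suc (card A')"] A by simp
  qed simp
qed

lemma card_small_block_partitions_Suc:
  "card (small_block_partitions m {1..Suc n}) =
    (\<Sum>i<m - 1. (n choose i) * card (small_block_partitions m {1..n - i}))"
proof -
  have "{1..Suc n} = insert (Suc n) {1..n}"
    by auto
  then have "card (small_block_partitions m {1..Suc n}) =
      (\<Sum>S\<in>{S. S \<subseteq> {1..n} \<and> card S < m - 1}. card (small_block_partitions m ({1..n} - S)))"
    using card_small_block_partitions_insert[of "{1..n}" "Suc n" m] by simp
  also have "\<dots> = (\<Sum>S\<in>{S. S \<subseteq> {1..n} \<and> card S < m - 1}.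
      card (small_block_partitions m {1..n - card S}))"
  proof (rule sum.cong[OF refl])
    fix S
    assume "S \<in> {S. S \<subseteq> {1..n} \<and> card S < m - 1}"
    then have "S \<subseteq> {1..n}"
      by simp
    then have "card ({1..n} - S) = n - card S"
      using card_Diff_subset[OF finite_subset] by fastforce
    then show "card (small_block_partitions m ({1..n} - S)) = card (small_block_partitions m {1..n - card S})"
      using card_small_block_partitions_eq[of "{1..n} - S" m] by simp
  qed
  also have "\<dots> = (\<Sum>i<m - 1. (n choose i) * card (small_block_partitions m {1..n - i}))"
    using sum_subsets_card_less[of "{1..n}"] by simp
  finally show ?thesis .
qed

lemma contains_oneblock_part_iff:
  assumes \<sigma>: "\<sigma> \<in> set_partitions n" and "m \<ge> 1"
  shows "contains \<sigma> (oneblock_part m) \<longleftrightarrow> (\<exists>B\<in>\<sigma>. m \<le> card B)"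
proof
  assume "contains \<sigma> (oneblock_part m)"
  then obtain \<tau> f where \<tau>: "subpartition \<tau> \<sigma>" "st \<tau> = {{1..m}}"
    and f: "\<forall>B\<in>\<tau>. f B \<in> \<sigma> \<and> B \<subseteq> f B"
    by (auto simp: contains_def subpartition_def oneblock_part_def)
  define S where "S = \<Union>\<tau>"
  have "finite S"
    using subpartition_finite[OF \<tau>(1) \<sigma>] by (simp add: S_def)
  obtain T where T: "T \<in> \<tau>"
    using \<tau>(2) by (auto simp: st_def)
  have "st_map S ` T \<in> st \<tau>"
    using T by (auto simp: st_def S_def)
  then have "st_map S ` T = {1..m}"
    using \<tau>(2) by simp
  moreover have "st_map S ` S = {1..m}"
    using Union_st[of \<tau>] \<tau>(2) by (simp add: S_def)
  moreover have "T \<subseteq> S"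
    using T by (auto simp: S_def)
  ultimately have "T = S" "card S = m"
    using inj_on_image_eq_iff[OF inj_on_st_map[OF \<open>finite S\<close>]] st_map_image[OF \<open>finite S\<close>]
    by (metis subset_refl, metis card_atLeastAtMost diff_Suc_1)
  moreover have "card T \<le> card (f T)"
    using f T set_partitions_block_subset[OF \<sigma>, of "f T"] by (intro card_mono) (auto intro: finite_subset)
  ultimately show "\<exists>B\<in>\<sigma>. m \<le> card B"
    using f T by auto
next
  assume "\<exists>B\<in>\<sigma>. m \<le> card B"
  then obtain B T where "B \<in> \<sigma>" "T \<subseteq> B" "card T = m" "finite T"
    by (meson obtain_subset_with_card_n)
  moreover have "partition_on T {T}"
    using \<open>card T = m\<close> \<open>m \<ge> 1\<close> by (intro partition_on_space) auto
  ultimately have "subpartition {T} \<sigma>" "st {T} = {{1..m}}"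
    using st_single_block[of T] by (auto intro!: subpartitionI)
  then show "contains \<sigma> (oneblock_part m)"
    by (auto simp: contains_def oneblock_part_def)
qed

theorem P_recursive_avoiders_oneblock_part:
  assumes "m \<ge> 1"
  shows "P_recursive (\<lambda>n. real (card (avoiders n (oneblock_part m))))"
proof -
  obtain d where m: "m = Suc d"
    using assms by (cases m) auto
  define a where "a n = real (card (small_block_partitions m {1..n}))" for n :: nat
  define c where "c j n = (if j = 0 then 0 else real ((n + d) choose (d - j)))" for j n
  have "a (n + m) = (\<Sum>j<m. c j n * a (n + j))" for n
  proof -
    have "a (n + m) = (\<Sum>i<d. real ((n + d) choose i) * a (n + d - i))"
      by (simp only: a_def m add_Suc_right card_small_block_partitions_Suc) simp
    also have "\<dots> = (\<Sum>j<d. real ((n + d) choose (d - Suc j)) * a (n + Suc j))"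
      by (subst sum.nat_diff_reindex[symmetric]) (intro sum.cong, auto simp: Suc_diff_Suc)
    also have "\<dots> = (\<Sum>j<m. c j n * a (n + j))"
      unfolding m sum.lessThan_Suc_shift by (simp add: c_def)
    finally show ?thesis .
  qed
  moreover have "\<exists>p. \<forall>n. poly p (real n) = c j n" for j
    using ex_poly_binomial[of d "d - j"] by (cases "j = 0") (auto simp: c_def intro: exI[of _ 0])
  ultimately have "P_recursive a"
    by (intro P_recursive_if_recurrence[of m c]) auto
  moreover have "(\<lambda>n. real (card (avoiders n (oneblock_part m)))) = a"
  proof
    fix n
    have "\<not> contains \<sigma> (oneblock_part m) \<longleftrightarrow> (\<forall>B\<in>\<sigma>. card B < m)" if "\<sigma> \<in> set_partitions n" for \<sigma>
      using contains_oneblock_part_iff[OF that assms] by (auto simp: not_le)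
    then have "avoiders n (oneblock_part m) = small_block_partitions m {1..n}"
      by (auto simp: avoiders_def small_block_partitions_def set_partitions_def)
    then show "real (card (avoiders n (oneblock_part m))) = a n"
      by (simp add: a_def)
  qed
  ultimately show ?thesis
    by simp
qed

section \<open>The pattern \<open>12/3/\<dots>/m\<close>\<close>

definition blocks_above :: "nat set set \<Rightarrow> nat set \<Rightarrow> nat \<Rightarrow> nat set set" where
  "blocks_above \<sigma> B b = {D\<in>\<sigma>. D \<noteq> B \<and> (\<exists>y\<in>D. b < y)}"

lemma card_pair_singletons_part:
  assumes "m \<ge> 2"
  shows "card (pair_singletons_part m) = m - 1"
proof -
  have "{1, 2} \<notin> (\<lambda>i. {i}) ` {3..m}"
    by auto
  moreover have "card ((\<lambda>i. {i}) ` {3..m}) = m - 2"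
    by (simp add: card_image)
  ultimately show ?thesis
    using assms by (simp add: pair_singletons_part_def)
qed

lemma st_eq_pair_singletons_partE:
  assumes fin: "finite (\<Union>\<tau>)" and "{} \<notin> \<tau>" and \<tau>: "st \<tau> = pair_singletons_part m"
  obtains T a b where "T \<in> \<tau>" "a \<in> T" "b \<in> T" "a < b" "\<And>T'. T' \<in> \<tau> \<Longrightarrow> T' \<noteq> T \<Longrightarrow> \<exists>z\<in>T'. b < z"
proof -
  define S where "S = \<Union>\<tau>"
  have "{1, 2} \<in> st \<tau>"
    using \<tau> by (simp add: pair_singletons_part_def)
  then obtain T where T: "T \<in> \<tau>" "st_map S ` T = {1, 2}"
    by (auto simp: st_def S_def)
  then obtain a b where ab: "a \<in> T" "st_map S a = 1" "b \<in> T" "st_map S b = 2"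
    by (metis imageE insertI1 insert_commute)
  have "T \<subseteq> S"
    using T by (auto simp: S_def)
  then have "a < b"
    using st_map_less_iff[OF fin[folded S_def], of a b] ab by auto
  moreover have "\<exists>z\<in>T'. b < z" if T': "T' \<in> \<tau>" "T' \<noteq> T" for T'
  proof -
    have "st_map S ` T' \<in> st \<tau>"
      using T' by (auto simp: st_def S_def)
    moreover have "st_map S ` T' \<noteq> {1, 2}"
      using T' T inj_on_image_st_map[OF fin] by (metis S_def inj_on_contraD)
    ultimately obtain i where i: "3 \<le> i" "st_map S ` T' = {i}"
      using \<tau> by (auto simp: pair_singletons_part_def)
    obtain z where z: "z \<in> T'"
      using \<open>{} \<notin> \<tau>\<close> T'(1) by (metis all_not_in_conv)
    then have "st_map S z = i"
      using i(2) by blast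
    then have "st_map S b < st_map S z"
      using ab i by simp
    moreover have "z \<in> S"
      using z T' by (auto simp: S_def)
    ultimately show ?thesis
      using st_map_less_iff[OF fin[folded S_def]] ab \<open>T \<subseteq> S\<close> z by blast
  qed
  ultimately show thesis
    using that T ab by blast
qed

lemma st_insert_pair_singletons:
  assumes "finite Z" "a < b" "\<forall>y\<in>Z. b < y"
  shows "st (insert {a, b} ((\<lambda>y. {y}) ` Z)) = pair_singletons_part (card Z + 2)"
proof -
  define S where "S = insert a (insert b Z)"
  have "a \<notin> Z" "b \<notin> Z" "finite S"
    using assms by (auto simp: S_def)
  have "{y\<in>S. y < a} = {}" "{y\<in>S. y < b} = {a}"
    using assms by (auto simp: S_def)
  then have st_ab: "st_map S a = 1" "st_map S b = 2"
    by (simp_all add: st_map_def)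
  have "st_map S ` Z = st_map S ` S - st_map S ` {a, b}"
    using \<open>a \<notin> Z\<close> \<open>b \<notin> Z\<close> inj_on_image_set_diff[OF inj_on_st_map[OF \<open>finite S\<close>], of S "{a, b}"]
    by (auto simp: S_def)
  also have "\<dots> = {1..card Z + 2} - {1, 2}"
    using st_map_image[OF \<open>finite S\<close>] \<open>a \<notin> Z\<close> \<open>b \<notin> Z\<close> assms st_ab by (simp add: S_def)
  also have "\<dots> = {3..card Z + 2}"
    by auto
  finally have "st_map S ` Z = {3..card Z + 2}" .
  have "\<Union>(insert {a, b} ((\<lambda>y. {y}) ` Z)) = S"
    by (auto simp: S_def)
  then have "st (insert {a, b} ((\<lambda>y. {y}) ` Z)) = insert (st_map S ` {a, b}) ((\<lambda>y. {st_map S y}) ` Z)"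
    by (simp add: st_def image_image)
  also have "\<dots> = insert {1, 2} ((\<lambda>i. {i}) ` (st_map S ` Z))"
    using st_ab by (simp add: image_image)
  also have "\<dots> = pair_singletons_part (card Z + 2)"
    using \<open>st_map S ` Z = {3..card Z + 2}\<close> by (simp add: pair_singletons_part_def)
  finally show ?thesis .
qed

lemma contains_pair_singletons_partD:
  assumes \<sigma>: "\<sigma> \<in> set_partitions n" and m: "m \<ge> 2"
    and "contains \<sigma> (pair_singletons_part m)"
  shows "\<exists>B\<in>\<sigma>. \<exists>a\<in>B. \<exists>b\<in>B. a < b \<and> m - 2 \<le> card (blocks_above \<sigma> B b)"
proof -
  obtain \<tau> f where \<tau>: "subpartition \<tau> \<sigma>" "st \<tau> = pair_singletons_part m"
    and f: "\<forall>B\<in>\<tau>. f B \<in> \<sigma> \<and> B \<subseteq> f B" "inj_on f \<tau>"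
    using assms(3) by (auto simp: contains_def subpartition_def)
  have fin: "finite (\<Union>\<tau>)"
    using subpartition_finite[OF \<tau>(1) \<sigma>] .
  moreover have "{} \<notin> \<tau>"
    using \<tau>(1) by (simp add: subpartition_def partition_on_def)
  ultimately obtain T a b where T: "T \<in> \<tau>" "a \<in> T" "b \<in> T" "a < b"
    and above: "\<And>T'. T' \<in> \<tau> \<Longrightarrow> T' \<noteq> T \<Longrightarrow> \<exists>z\<in>T'. b < z"
    using st_eq_pair_singletons_partE \<tau>(2) by metis
  have "card (\<tau> - {T}) = m - 2"
    using card_st[OF fin] \<tau>(2) card_pair_singletons_part[OF m] T(1) finite_UnionD[OF fin] by simp
  moreover have "inj_on f (\<tau> - {T})"
    using f(2) by (rule inj_on_subset) auto
  moreover have "f ` (\<tau> - {T}) \<subseteq> blocks_above \<sigma> (f T) b"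
  proof
    fix D
    assume "D \<in> f ` (\<tau> - {T})"
    then obtain T' where T': "T' \<in> \<tau>" "T' \<noteq> T" "D = f T'"
      by blast
    then have "f T' \<noteq> f T"
      using f(2) T by (meson inj_onD)
    then show "D \<in> blocks_above \<sigma> (f T) b"
      using f T' above[OF T'(1,2)] by (auto simp: blocks_above_def)
  qed
  moreover have "finite (blocks_above \<sigma> (f T) b)"
    using set_partitions_finite[OF \<sigma>] by (simp add: blocks_above_def)
  ultimately have "m - 2 \<le> card (blocks_above \<sigma> (f T) b)"
    by (metis card_image card_mono)
  then show ?thesis
    using f T by blast
qed

text \<open>Conversely, \<open>a, b\<close> together with one element above \<open>b\<close> from each of
  \<open>m - 2\<close> other blocks form an occurrence of the pattern.\<close>

lemma contains_pair_singletons_partI: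
  assumes \<sigma>: "\<sigma> \<in> set_partitions n" and m: "m \<ge> 2"
    and B: "B \<in> \<sigma>" "a \<in> B" "b \<in> B" "a < b" and above: "m - 2 \<le> card (blocks_above \<sigma> B b)"
  shows "contains \<sigma> (pair_singletons_part m)"
proof -
  obtain K where K: "K \<subseteq> blocks_above \<sigma> B b" "card K = m - 2" "finite K"
    using above by (meson obtain_subset_with_card_n)
  define z where "z D = (SOME y. y \<in> D \<and> b < y)" for D
  have z: "z D \<in> D" "b < z D" if "D \<in> K" for D
    using K(1) that someI_ex[of "\<lambda>y. y \<in> D \<and> b < y"] by (auto simp: z_def blocks_above_def)
  have K\<sigma>: "D \<in> \<sigma>" "D \<noteq> B" if "D \<in> K" for D
    using K(1) that by (auto simp: blocks_above_def)
  have "inj_on z K"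
    by (rule inj_onI) (metis set_partitions_block_eq[OF \<sigma>] z K\<sigma>)
  define Z where "Z = z ` K"
  have Z: "card Z = m - 2" "finite Z" "\<forall>y\<in>Z. b < y"
    using \<open>inj_on z K\<close> K z by (auto simp: Z_def card_image)
  define \<tau> where "\<tau> = insert {a, b} ((\<lambda>y. {y}) ` Z)"
  have "a \<notin> Z" "b \<notin> Z"
    using Z(3) B(4) by auto
  have "subpartition \<tau> \<sigma>"
  proof (rule subpartitionI)
    have "disjnt {a, b} (\<Union>((\<lambda>y. {y}) ` Z))"
      using \<open>a \<notin> Z\<close> \<open>b \<notin> Z\<close> by (auto simp: disjnt_def)
    then show "partition_on (\<Union>\<tau>) \<tau>"
      unfolding \<tau>_def using partition_on_singletons[of Z] \<open>a \<notin> Z\<close> \<open>b \<notin> Z\<close>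
      by (subst partition_on_insert) (auto simp: insert_Diff_if)
    show "\<exists>D\<in>\<sigma>. T \<subseteq> D" if "T \<in> \<tau>" for T
      using that B z K\<sigma> by (auto simp: \<tau>_def Z_def)
    have block: "(T = {a, b} \<and> D = B) \<or> (\<exists>E\<in>K. T = {z E} \<and> D = E)"
      if T: "T \<in> \<tau>" "D \<in> \<sigma>" "T \<subseteq> D" for T D
    proof (cases "T = {a, b}")
      case True
      then show ?thesis
        using set_partitions_block_eq[OF \<sigma> T(2) B(1), of a] T B by auto
    next
      case False
      then obtain E where "E \<in> K" "T = {z E}"
        using T by (auto simp: \<tau>_def Z_def)
      then show ?thesis
        using set_partitions_block_eq[OF \<sigma> T(2) K\<sigma>(1), of E "z E"] T z by auto
    qed
    show "T1 = T2" if "T1 \<in> \<tau>" "T2 \<in> \<tau>" "D \<in> \<sigma>" "T1 \<subseteq> D" "T2 \<subseteq> D" for T1 T2 D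
      using block[OF that(1,3,4)] block[OF that(2,3,5)] K\<sigma> by auto
  qed
  moreover have "card Z + 2 = m"
    using Z(1) m by simp
  then have "st \<tau> = pair_singletons_part m"
    using st_insert_pair_singletons[OF Z(2) B(4) Z(3)] by (simp only: \<tau>_def)
  ultimately show ?thesis
    by (auto simp: contains_def)
qed

definition non_minima :: "nat set set \<Rightarrow> nat set" where
  "non_minima \<sigma> = {y. \<exists>B\<in>\<sigma>. y \<in> B \<and> (\<exists>x\<in>B. x < y)}"

definition first_repeat :: "nat set set \<Rightarrow> nat" where
  "first_repeat \<sigma> = Min (non_minima \<sigma>)"

text \<open>The blocks not containing \<open>first_repeat \<sigma>\<close> split into active ones, which have an element
  above it, and dormant ones, which become active as soon as they receive a new element.\<close>

definition active_blocks :: "nat set set \<Rightarrow> nat set set" where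
  "active_blocks \<sigma> = {D\<in>\<sigma>. first_repeat \<sigma> \<notin> D \<and> (\<exists>y\<in>D. first_repeat \<sigma> < y)}"

definition dormant_blocks :: "nat set set \<Rightarrow> nat set set" where
  "dormant_blocks \<sigma> = {D\<in>\<sigma>. first_repeat \<sigma> \<notin> D \<and> (\<forall>y\<in>D. y \<le> first_repeat \<sigma>)}"

lemma non_minima_subset: "\<sigma> \<in> set_partitions n \<Longrightarrow> non_minima \<sigma> \<subseteq> {1..n}"
  using set_partitions_block_subset by (fastforce simp: non_minima_def)

lemma finite_non_minima: "\<sigma> \<in> set_partitions n \<Longrightarrow> finite (non_minima \<sigma>)"
  using non_minima_subset finite_subset by blast

lemma first_repeat_in_non_minima:
  "\<sigma> \<in> set_partitions n \<Longrightarrow> non_minima \<sigma> \<noteq> {} \<Longrightarrow> first_repeat \<sigma> \<in> non_minima \<sigma>"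
  by (simp add: first_repeat_def finite_non_minima)

lemma first_repeat_le:
  "\<sigma> \<in> set_partitions n \<Longrightarrow> y \<in> non_minima \<sigma> \<Longrightarrow> first_repeat \<sigma> \<le> y"
  by (simp add: first_repeat_def finite_non_minima)

lemma card_blocks_above_le_active_blocks:
  assumes \<sigma>: "\<sigma> \<in> set_partitions n" and B: "B \<in> \<sigma>" "a \<in> B" "b \<in> B" "a < b"
  shows "card (blocks_above \<sigma> B b) \<le> card (active_blocks \<sigma>)"
proof -
  have "b \<in> non_minima \<sigma>"
    using B by (auto simp: non_minima_def)
  then have ne: "non_minima \<sigma> \<noteq> {}" and le: "first_repeat \<sigma> \<le> b"
    using first_repeat_le[OF \<sigma>] by auto
  obtain B0 where B0: "B0 \<in> \<sigma>" "first_repeat \<sigma> \<in> B0"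
    using first_repeat_in_non_minima[OF \<sigma> ne] by (auto simp: non_minima_def)
  have fin: "finite (active_blocks \<sigma>)"
    using set_partitions_finite[OF \<sigma>] by (simp add: active_blocks_def)
  show ?thesis
  proof (cases "first_repeat \<sigma> \<in> B")
    case True
    then have "blocks_above \<sigma> B b \<subseteq> active_blocks \<sigma>"
      using set_partitions_block_eq[OF \<sigma>] B le
      by (fastforce simp: active_blocks_def blocks_above_def)
    then show ?thesis
      using fin by (rule card_mono[rotated])
  next
    case False
    then have "B \<in> active_blocks \<sigma>"
      using B le by (auto simp: active_blocks_def le_less)
    have "blocks_above \<sigma> B b \<subseteq> insert B0 (active_blocks \<sigma> - {B})"
      using set_partitions_block_eq[OF \<sigma>] B0 le
      by (fastforce simp: active_blocks_def blocks_above_def)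
    then have "card (blocks_above \<sigma> B b) \<le> card (insert B0 (active_blocks \<sigma> - {B}))"
      using fin by (intro card_mono) auto
    also have "\<dots> \<le> Suc (card (active_blocks \<sigma> - {B}))"
      using fin by (simp add: card_insert_if)
    also have "\<dots> = card (active_blocks \<sigma>)"
      using card_Suc_Diff1[OF fin \<open>B \<in> active_blocks \<sigma>\<close>] .
    finally show ?thesis .
  qed
qed

lemma blocks_above_first_repeat:
  assumes \<sigma>: "\<sigma> \<in> set_partitions n" and "non_minima \<sigma> \<noteq> {}"
  obtains B a where "B \<in> \<sigma>" "a \<in> B" "first_repeat \<sigma> \<in> B" "a < first_repeat \<sigma>"
    "blocks_above \<sigma> B (first_repeat \<sigma>) = active_blocks \<sigma>"
proof -
  obtain B a where B: "B \<in> \<sigma>" "first_repeat \<sigma> \<in> B" "a \<in> B" "a < first_repeat \<sigma>"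
    using first_repeat_in_non_minima[OF assms] by (auto simp: non_minima_def)
  have "D \<noteq> B \<longleftrightarrow> first_repeat \<sigma> \<notin> D" if "D \<in> \<sigma>" for D
    using set_partitions_block_eq[OF \<sigma> that B(1) _ B(2)] B(2) by blast
  then have "blocks_above \<sigma> B (first_repeat \<sigma>) = active_blocks \<sigma>"
    by (auto simp: active_blocks_def blocks_above_def)
  then show thesis
    using that B by blast
qed

text \<open>Among all pairs \<open>a < b\<close> in a common block, the one with the least \<open>b\<close> has the
  most blocks above it.\<close>

lemma pattern_iff_first_repeat:
  assumes \<sigma>: "\<sigma> \<in> set_partitions n"
  shows "(\<exists>B\<in>\<sigma>. \<exists>a\<in>B. \<exists>b\<in>B. a < b \<and> k \<le> card (blocks_above \<sigma> B b)) \<longleftrightarrow>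
    non_minima \<sigma> \<noteq> {} \<and> k \<le> card (active_blocks \<sigma>)"
proof
  assume "\<exists>B\<in>\<sigma>. \<exists>a\<in>B. \<exists>b\<in>B. a < b \<and> k \<le> card (blocks_above \<sigma> B b)"
  then obtain B a b where B: "B \<in> \<sigma>" "a \<in> B" "b \<in> B" "a < b" "k \<le> card (blocks_above \<sigma> B b)"
    by blast
  then have "b \<in> non_minima \<sigma>"
    by (auto simp: non_minima_def)
  then show "non_minima \<sigma> \<noteq> {} \<and> k \<le> card (active_blocks \<sigma>)"
    using card_blocks_above_le_active_blocks[OF \<sigma> B(1-4)] B(5) by auto
next
  assume *: "non_minima \<sigma> \<noteq> {} \<and> k \<le> card (active_blocks \<sigma>)"
  then obtain B a where "B \<in> \<sigma>" "a \<in> B" "first_repeat \<sigma> \<in> B" "a < first_repeat \<sigma>"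
    "blocks_above \<sigma> B (first_repeat \<sigma>) = active_blocks \<sigma>"
    using blocks_above_first_repeat[OF \<sigma>] by blast
  then show "\<exists>B\<in>\<sigma>. \<exists>a\<in>B. \<exists>b\<in>B. a < b \<and> k \<le> card (blocks_above \<sigma> B b)"
    using * by (metis (no_types))
qed

theorem contains_pair_singletons_part_iff:
  assumes "\<sigma> \<in> set_partitions n" "m \<ge> 2"
  shows "contains \<sigma> (pair_singletons_part m) \<longleftrightarrow>
    non_minima \<sigma> \<noteq> {} \<and> m - 2 \<le> card (active_blocks \<sigma>)"
  using contains_pair_singletons_partD[OF assms] contains_pair_singletons_partI[OF assms]
    pattern_iff_first_repeat[OF assms(1)]
  by blast

lemma non_minima_empty_imp_singleton:
  assumes "non_minima \<sigma> = {}" "B \<in> \<sigma>" "x \<in> B"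
  shows "B = {x}"
proof -
  have "y = x" if "y \<in> B" for y
  proof (rule ccontr)
    assume "y \<noteq> x"
    then have "y \<in> non_minima \<sigma> \<or> x \<in> non_minima \<sigma>"
      using assms(2,3) that unfolding non_minima_def by (auto dest: linorder_neqE_nat)
    then show False
      using assms(1) by blast
  qed
  then show ?thesis
    using assms(3) by blast
qed

lemma non_minima_empty_iff:
  assumes \<sigma>: "\<sigma> \<in> set_partitions n"
  shows "non_minima \<sigma> = {} \<longleftrightarrow> \<sigma> = singletons_part n"
proof
  assume "non_minima \<sigma> = {}"
  note single = non_minima_empty_imp_singleton[OF this]
  have U: "\<Union>\<sigma> = {1..n}"
    using \<sigma> by (simp add: set_partitions_iff)
  show "\<sigma> = singletons_part n"
  proof
    show "\<sigma> \<subseteq> singletons_part n"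
    proof
      fix B
      assume B: "B \<in> \<sigma>"
      then obtain x where x: "x \<in> B"
        using set_partitions_block_nonempty[OF \<sigma>] by blast
      then have "B = {x}" "x \<in> {1..n}"
        using single B U by blast+
      then show "B \<in> singletons_part n"
        by (simp add: singletons_part_def)
    qed
    show "singletons_part n \<subseteq> \<sigma>"
    proof
      fix B
      assume "B \<in> singletons_part n"
      then obtain x where x: "x \<in> {1..n}" "B = {x}"
        by (auto simp: singletons_part_def)
      then obtain B' where "B' \<in> \<sigma>" "x \<in> B'"
        using U by blast
      then show "B \<in> \<sigma>"
        using single x by blast
    qed
  qed
next
  assume "\<sigma> = singletons_part n"
  then show "non_minima \<sigma> = {}"
    by (auto simp: non_minima_def singletons_part_def)
qed

lemma card_split_first_repeat:
  assumes \<sigma>: "\<sigma> \<in> set_partitions n" and ne: "non_minima \<sigma> \<noteq> {}"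
  shows "card \<sigma> = Suc (card (active_blocks \<sigma>) + card (dormant_blocks \<sigma>))"
proof -
  obtain B0 where B0: "B0 \<in> \<sigma>" "first_repeat \<sigma> \<in> B0"
    using first_repeat_in_non_minima[OF \<sigma> ne] by (auto simp: non_minima_def)
  have "\<sigma> = insert B0 (active_blocks \<sigma> \<union> dormant_blocks \<sigma>)"
    using set_partitions_block_eq[OF \<sigma>] B0 by (auto simp: active_blocks_def dormant_blocks_def not_le)
  moreover have "B0 \<notin> active_blocks \<sigma> \<union> dormant_blocks \<sigma>"
    using B0 by (auto simp: active_blocks_def dormant_blocks_def)
  moreover have "active_blocks \<sigma> \<inter> dormant_blocks \<sigma> = {}"
    by (auto simp: active_blocks_def dormant_blocks_def not_less[symmetric])
  moreover have "finite (active_blocks \<sigma>)" "finite (dormant_blocks \<sigma>)"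
    using set_partitions_finite[OF \<sigma>] by (auto simp: active_blocks_def dormant_blocks_def)
  ultimately show ?thesis
    by (metis card_Un_disjoint card_insert_disjoint finite_Un)
qed

context
  fixes n :: nat and \<sigma> :: "nat set set"
  assumes \<sigma>: "\<sigma> \<in> set_partitions n"
begin

lemma set_partitions_elem_le: "B \<in> \<sigma> \<Longrightarrow> y \<in> B \<Longrightarrow> y \<le> n"
  using set_partitions_block_subset[OF \<sigma>] by fastforce

lemma non_minima_add_singleton: "non_minima (add_singleton n \<sigma>) = non_minima \<sigma>"
  by (auto simp: non_minima_def add_singleton_def)

lemma non_minima_add_to_block:
  assumes C: "C \<in> \<sigma>"
  shows "non_minima (add_to_block n \<sigma> C) = insert (Suc n) (non_minima \<sigma>)"
proof
  show "non_minima (add_to_block n \<sigma> C) \<subseteq> insert (Suc n) (non_minima \<sigma>)"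
  proof
    fix y
    assume "y \<in> non_minima (add_to_block n \<sigma> C)"
    then obtain B x where B: "B \<in> add_to_block n \<sigma> C" "y \<in> B" "x \<in> B" "x < y"
      by (auto simp: non_minima_def)
    show "y \<in> insert (Suc n) (non_minima \<sigma>)"
    proof (cases "B = insert (Suc n) C \<and> y \<noteq> Suc n")
      case True
      then have "y \<in> C" "x \<in> C"
        using B set_partitions_elem_le[OF C] by fastforce+
      then show ?thesis
        using C B(4) by (auto simp: non_minima_def)
    next
      case False
      then show ?thesis
        using B by (auto simp: non_minima_def add_to_block_def)
    qed
  qed
  obtain x where "x \<in> C"
    using set_partitions_block_nonempty[OF \<sigma> C] by blast
  moreover have "x < Suc n"
    using set_partitions_elem_le[OF C \<open>x \<in> C\<close>] by simp
  ultimately have "Suc n \<in> non_minima (add_to_block n \<sigma> C)"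
    by (auto simp: non_minima_def add_to_block_def)
  moreover have "non_minima \<sigma> \<subseteq> non_minima (add_to_block n \<sigma> C)"
    unfolding non_minima_def add_to_block_def by blast
  ultimately show "insert (Suc n) (non_minima \<sigma>) \<subseteq> non_minima (add_to_block n \<sigma> C)"
    by blast
qed

lemma first_repeat_le_n: "non_minima \<sigma> \<noteq> {} \<Longrightarrow> first_repeat \<sigma> \<le> n"
  using first_repeat_in_non_minima[OF \<sigma>] non_minima_subset[OF \<sigma>] by fastforce

lemma first_repeat_add_singleton: "first_repeat (add_singleton n \<sigma>) = first_repeat \<sigma>"
  by (simp add: first_repeat_def non_minima_add_singleton)

lemma first_repeat_add_to_block:
  assumes "C \<in> \<sigma>" "non_minima \<sigma> \<noteq> {}"
  shows "first_repeat (add_to_block n \<sigma> C) = first_repeat \<sigma>"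
proof -
  have "first_repeat (add_to_block n \<sigma> C) = min (Suc n) (first_repeat \<sigma>)"
    using finite_non_minima[OF \<sigma>] assms
    by (simp add: first_repeat_def non_minima_add_to_block Min_insert)
  then show ?thesis
    using first_repeat_le_n[OF assms(2)] by simp
qed

lemma first_repeat_add_to_block_singletons:
  "C \<in> \<sigma> \<Longrightarrow> non_minima \<sigma> = {} \<Longrightarrow> first_repeat (add_to_block n \<sigma> C) = Suc n"
  by (simp add: first_repeat_def non_minima_add_to_block)

lemma finite_active_blocks: "finite (active_blocks \<sigma>)"
  and finite_dormant_blocks: "finite (dormant_blocks \<sigma>)"
  using set_partitions_finite[OF \<sigma>] by (auto simp: active_blocks_def dormant_blocks_def)

lemma card_active_blocks_add_singleton:
  assumes "non_minima \<sigma> \<noteq> {}"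
  shows "card (active_blocks (add_singleton n \<sigma>)) = Suc (card (active_blocks \<sigma>))"
proof -
  have "active_blocks (add_singleton n \<sigma>) = insert {Suc n} (active_blocks \<sigma>)"
    unfolding active_blocks_def first_repeat_add_singleton
    using first_repeat_le_n[OF assms] by (auto simp: add_singleton_def)
  moreover have "{Suc n} \<notin> active_blocks \<sigma>"
    using Suc_notin_block[OF \<sigma>] by (auto simp: active_blocks_def)
  ultimately show ?thesis
    using finite_active_blocks by simp
qed

lemma dormant_blocks_add_singleton:
  "non_minima \<sigma> \<noteq> {} \<Longrightarrow> dormant_blocks (add_singleton n \<sigma>) = dormant_blocks \<sigma>"
  unfolding dormant_blocks_def first_repeat_add_singleton
  using first_repeat_le_n by (auto simp: add_singleton_def)

lemma card_active_blocks_add_to_block: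
  assumes C: "C \<in> \<sigma>" and ne: "non_minima \<sigma> \<noteq> {}"
  shows "card (active_blocks (add_to_block n \<sigma> C)) =
    (if C \<in> dormant_blocks \<sigma> then Suc (card (active_blocks \<sigma>)) else card (active_blocks \<sigma>))"
proof (cases "first_repeat \<sigma> \<in> C")
  case True
  then have "active_blocks (add_to_block n \<sigma> C) = active_blocks \<sigma>"
    unfolding active_blocks_def first_repeat_add_to_block[OF C ne]
    using C by (auto simp: add_to_block_def)
  moreover have "C \<notin> dormant_blocks \<sigma>"
    using True by (simp add: dormant_blocks_def)
  ultimately show ?thesis
    by simp
next
  case False
  have "active_blocks (add_to_block n \<sigma> C) = insert (insert (Suc n) C) (active_blocks \<sigma> - {C})"
    unfolding active_blocks_def first_repeat_add_to_block[OF C ne]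
    using C False first_repeat_le_n[OF ne] by (auto simp: add_to_block_def)
  moreover have "insert (Suc n) C \<notin> active_blocks \<sigma> - {C}"
    using Suc_notin_block[OF \<sigma>] by (auto simp: active_blocks_def)
  ultimately have *: "card (active_blocks (add_to_block n \<sigma> C)) = Suc (card (active_blocks \<sigma> - {C}))"
    using finite_active_blocks by simp
  show ?thesis
  proof (cases "C \<in> dormant_blocks \<sigma>")
    case True
    then have "C \<notin> active_blocks \<sigma>"
      by (auto simp: active_blocks_def dormant_blocks_def not_le)
    then show ?thesis
      using * True by simp
  next
    case False
    then have "C \<in> active_blocks \<sigma>"
      using C \<open>first_repeat \<sigma> \<notin> C\<close> by (auto simp: active_blocks_def dormant_blocks_def not_le)
    then show ?thesis
      using * False card_Suc_Diff1[OF finite_active_blocks] by simp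
  qed
qed

lemma dormant_blocks_add_to_block:
  assumes "C \<in> \<sigma>" "non_minima \<sigma> \<noteq> {}"
  shows "dormant_blocks (add_to_block n \<sigma> C) = dormant_blocks \<sigma> - {C}"
  unfolding dormant_blocks_def first_repeat_add_to_block[OF assms]
  using assms first_repeat_le_n[OF assms(2)] Suc_notin_block[OF \<sigma>] by (auto simp: add_to_block_def)

lemma active_blocks_add_to_block_singletons:
  assumes "C \<in> \<sigma>" "non_minima \<sigma> = {}"
  shows "active_blocks (add_to_block n \<sigma> C) = {}"
  unfolding active_blocks_def first_repeat_add_to_block_singletons[OF assms]
  using set_partitions_elem_le[OF assms(1)] set_partitions_elem_le by (fastforce simp: add_to_block_def)

lemma dormant_blocks_add_to_block_singletons:
  assumes "C \<in> \<sigma>" "non_minima \<sigma> = {}"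
  shows "dormant_blocks (add_to_block n \<sigma> C) = \<sigma> - {C}"
  unfolding dormant_blocks_def first_repeat_add_to_block_singletons[OF assms]
  using set_partitions_elem_le[OF assms(1)] set_partitions_elem_le Suc_notin_block[OF \<sigma>] by (fastforce simp: add_to_block_def)

end

definition dormant_weight :: "nat \<Rightarrow> nat \<Rightarrow> nat set set \<Rightarrow> real" where
  "dormant_weight i c \<sigma> =
    (if non_minima \<sigma> \<noteq> {} \<and> card (active_blocks \<sigma>) = c then real (card (dormant_blocks \<sigma>) choose i)
     else 0)"

text \<open>Adding \<open>n + 1\<close> to one of \<open>u\<close> dormant blocks contributes \<open>u * ((u - 1) choose i) =
  (i + 1) * (u choose (i + 1))\<close>, so these binomial moments satisfy a closed system of recurrences.\<close>

definition dormant_moment :: "nat \<Rightarrow> nat \<Rightarrow> nat \<Rightarrow> real" where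
  "dormant_moment i c n = (\<Sum>\<sigma>\<in>set_partitions n. dormant_weight i c \<sigma>)"

lemma Suc_times_binomial_pred: "real u * real ((u - 1) choose i) = real (Suc i) * real (u choose Suc i)"
proof -
  have "Suc i * (u choose Suc i) = u * ((u - 1) choose i)"
    using times_binomial_minus1_eq[of "Suc i" u] by (simp only: zero_less_Suc diff_Suc_1 simp_thms)
  then show ?thesis
    by (metis of_nat_mult)
qed

lemma card_non_dormant_blocks:
  assumes \<sigma>: "\<sigma> \<in> set_partitions n" and "non_minima \<sigma> \<noteq> {}"
  shows "card (\<sigma> - dormant_blocks \<sigma>) = Suc (card (active_blocks \<sigma>))"
proof -
  have "card (\<sigma> - dormant_blocks \<sigma>) = card \<sigma> - card (dormant_blocks \<sigma>)"
    using set_partitions_finite[OF \<sigma>] by (auto simp: dormant_blocks_def intro: card_Diff_subset finite_subset)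
  then show ?thesis
    using card_split_first_repeat[OF assms] by simp
qed

lemma dormant_weight_extensions_non_minima:
  assumes \<sigma>: "\<sigma> \<in> set_partitions n" and ne: "non_minima \<sigma> \<noteq> {}"
  shows "extensions_sum (dormant_weight i c) n \<sigma> = (1 + real c) * dormant_weight i c \<sigma> +
    (if c = 0 then 0 else dormant_weight i (c - 1) \<sigma> + real (Suc i) * dormant_weight (Suc i) (c - 1) \<sigma>)"
proof -
  define a u where "a = card (active_blocks \<sigma>)" and "u = card (dormant_blocks \<sigma>)"
  define X Y where "X = (if Suc a = c then real ((u - 1) choose i) else 0)"
    and "Y = (if a = c then real (u choose i) else 0)"
  have "dormant_weight i c (add_singleton n \<sigma>) = (if Suc a = c then real (u choose i) else 0)"
    using ne by (simp add: dormant_weight_def non_minima_add_singleton[OF \<sigma>]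
        card_active_blocks_add_singleton[OF \<sigma>] dormant_blocks_add_singleton[OF \<sigma>] a_def u_def)
  moreover have "(\<Sum>C\<in>\<sigma>. dormant_weight i c (add_to_block n \<sigma> C)) =
      (\<Sum>C\<in>\<sigma>. if C \<in> dormant_blocks \<sigma> then X else Y)"
    using ne finite_dormant_blocks[OF \<sigma>]
    by (intro sum.cong) (simp_all add: dormant_weight_def non_minima_add_to_block[OF \<sigma>]
        card_active_blocks_add_to_block[OF \<sigma>] dormant_blocks_add_to_block[OF \<sigma>] a_def u_def X_def Y_def)
  moreover have "(\<Sum>C\<in>\<sigma>. if C \<in> dormant_blocks \<sigma> then X else Y) =
      (\<Sum>C\<in>dormant_blocks \<sigma>. X) + (\<Sum>C\<in>\<sigma> - dormant_blocks \<sigma>. Y)"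
    using sum.If_cases[OF set_partitions_finite[OF \<sigma>], of "\<lambda>C. C \<in> dormant_blocks \<sigma>" "\<lambda>_. X" "\<lambda>_. Y"]
    by (simp add: Int_absorb1 Diff_eq[symmetric] dormant_blocks_def Collect_mem_eq)
  ultimately have "extensions_sum (dormant_weight i c) n \<sigma> =
      (if Suc a = c then real (u choose i) else 0) + real u * X + real (Suc a) * Y"
    using card_non_dormant_blocks[OF \<sigma> ne] by (simp add: u_def a_def)
  moreover have "dormant_weight j d \<sigma> = (if a = d then real (u choose j) else 0)" for j d
    using ne by (simp add: dormant_weight_def a_def u_def)
  ultimately show ?thesis
    using Suc_times_binomial_pred[of u i] by (cases c) (auto simp: algebra_simps X_def Y_def)
qed

lemma dormant_weight_extensions_singletons:
  assumes \<sigma>: "\<sigma> \<in> set_partitions n" and empty: "non_minima \<sigma> = {}"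
  shows "extensions_sum (dormant_weight i c) n \<sigma> =
    (if c = 0 then real (Suc i) * real (n choose Suc i) else 0)"
proof -
  have "card \<sigma> = n"
    using non_minima_empty_iff[OF \<sigma>] empty by (simp add: singletons_part_def card_image)
  have "dormant_weight i c (add_singleton n \<sigma>) = 0"
    using empty by (simp add: dormant_weight_def non_minima_add_singleton[OF \<sigma>])
  moreover have "(\<Sum>C\<in>\<sigma>. dormant_weight i c (add_to_block n \<sigma> C)) =
      (\<Sum>C\<in>\<sigma>. if c = 0 then real ((n - 1) choose i) else 0)"
    using empty set_partitions_finite[OF \<sigma>] \<open>card \<sigma> = n\<close>
    by (intro sum.cong) (simp_all add: dormant_weight_def non_minima_add_to_block[OF \<sigma>]
        active_blocks_add_to_block_singletons[OF \<sigma>] dormant_blocks_add_to_block_singletons[OF \<sigma>])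
  ultimately show ?thesis
    using \<open>card \<sigma> = n\<close> Suc_times_binomial_pred[of n i] by simp
qed

lemma sum_set_partitions_non_minima_empty:
  "(\<Sum>\<sigma>\<in>set_partitions n. if non_minima \<sigma> = {} then x else 0) = (x :: real)"
proof -
  have "singletons_part n \<in> set_partitions n"
    by (simp add: singletons_part_def set_partitions_def partition_on_singletons)
  moreover have "(\<Sum>\<sigma>\<in>set_partitions n. if non_minima \<sigma> = {} then x else 0) =
      (\<Sum>\<sigma>\<in>set_partitions n. if \<sigma> = singletons_part n then x else 0)"
    by (intro sum.cong) (simp_all add: non_minima_empty_iff)
  ultimately show ?thesis
    by (simp add: finite_set_partitions)
qed

lemma dormant_moment_Suc:
  "dormant_moment i c (Suc n) = (1 + real c) * dormant_moment i c n +
     (if c = 0 then real (Suc i) * real (n choose Suc i)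
      else dormant_moment i (c - 1) n + real (Suc i) * dormant_moment (Suc i) (c - 1) n)"
proof -
  have "dormant_moment i c (Suc n) = (\<Sum>\<sigma>\<in>set_partitions n.
      dormant_weight i c (add_singleton n \<sigma>) + (\<Sum>C\<in>\<sigma>. dormant_weight i c (add_to_block n \<sigma> C)))"
    unfolding dormant_moment_def by (rule sum_set_partitions_Suc)
  also have "\<dots> = (\<Sum>\<sigma>\<in>set_partitions n. (1 + real c) * dormant_weight i c \<sigma> +
      (if c = 0 then (if non_minima \<sigma> = {} then real (Suc i) * real (n choose Suc i) else 0)
       else dormant_weight i (c - 1) \<sigma> + real (Suc i) * dormant_weight (Suc i) (c - 1) \<sigma>))"
  proof (rule sum.cong[OF refl])
    fix \<sigma>
    assume \<sigma>: "\<sigma> \<in> set_partitions n"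
    show "extensions_sum (dormant_weight i c) n \<sigma> = (1 + real c) * dormant_weight i c \<sigma> +
      (if c = 0 then (if non_minima \<sigma> = {} then real (Suc i) * real (n choose Suc i) else 0)
       else dormant_weight i (c - 1) \<sigma> + real (Suc i) * dormant_weight (Suc i) (c - 1) \<sigma>)"
      using dormant_weight_extensions_non_minima[OF \<sigma>] dormant_weight_extensions_singletons[OF \<sigma>]
      by (cases "non_minima \<sigma> = {}") (simp_all add: dormant_weight_def)
  qed
  also have "\<dots> = (1 + real c) * dormant_moment i c n +
      (if c = 0 then real (Suc i) * real (n choose Suc i)
       else dormant_moment i (c - 1) n + real (Suc i) * dormant_moment (Suc i) (c - 1) n)"
    by (cases "c = 0")
      (simp_all add: sum.distrib sum_distrib_left dormant_moment_def sum_set_partitions_non_minima_empty)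
  finally show ?thesis .
qed

lemma C_finite_dormant_moment: "C_finite (dormant_moment i c)"
proof (induction c arbitrary: i)
  case 0
  show ?case
    by (rule C_finite_first_order[OF C_finite_mult_const[OF C_finite_binomial], of _ 1])
      (simp add: dormant_moment_Suc)
next
  case (Suc c)
  show ?case
    by (rule C_finite_first_order[OF C_finite_add[OF Suc C_finite_mult_const[OF Suc]], of _ "1 + real (Suc c)"])
      (simp add: dormant_moment_Suc)
qed

theorem P_recursive_avoiders_pair_singletons_part:
  assumes "m \<ge> 2"
  shows "P_recursive (\<lambda>n. real (card (avoiders n (pair_singletons_part m))))"
proof -
  have "real (card (avoiders n (pair_singletons_part m))) = 1 + (\<Sum>c<m - 2. dormant_moment 0 c n)" for n
  proof -
    have "real (card (avoiders n (pair_singletons_part m))) =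
        (\<Sum>\<sigma>\<in>set_partitions n. of_bool (non_minima \<sigma> = {} \<or> card (active_blocks \<sigma>) < m - 2))"
      unfolding avoiders_def of_nat_card_set_partitions_filter[symmetric]
      using contains_pair_singletons_part_iff[OF _ assms] by (metis (mono_tags) not_le)
    also have "\<dots> = (\<Sum>\<sigma>\<in>set_partitions n. (if non_minima \<sigma> = {} then 1 else 0) + (\<Sum>c<m - 2. dormant_weight 0 c \<sigma>))"
      by (intro sum.cong) (auto simp: dormant_weight_def)
    also have "\<dots> = 1 + (\<Sum>c<m - 2. dormant_moment 0 c n)"
      by (simp add: sum.distrib sum_set_partitions_non_minima_empty dormant_moment_def sum.swap[of _ "{..<m - 2}"])
    finally show ?thesis .
  qed
  then show ?thesis
    by (simp add: C_finite_imp_P_recursive C_finite_add C_finite_const C_finite_sum C_finite_dormant_moment)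
qed

section \<open>The pattern \<open>13/2\<close>\<close>

definition convex_blocks :: "nat set set \<Rightarrow> bool" where
  "convex_blocks \<sigma> \<longleftrightarrow> (\<forall>B\<in>\<sigma>. \<forall>x\<in>B. \<forall>z\<in>B. {x..z} \<subseteq> B)"

lemma st_13_2:
  assumes "x < y" "y < z"
  shows "st {{x, z}, {y}} = {{1, 3}, {2 :: nat}}"
proof -
  have "{w\<in>{x, y, z}. w < x} = {}" "{w\<in>{x, y, z}. w < y} = {x}" "{w\<in>{x, y, z}. w < z} = {x, y}"
    using assms by auto
  then have "st_map {x, y, z} x = 1" "st_map {x, y, z} y = 2" "st_map {x, y, z} z = 3"
    using assms by (simp_all add: st_map_def)
  moreover have "\<Union>{{x, z}, {y}} = {x, y, z}"
    by auto
  ultimately show ?thesis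
    by (simp add: st_def insert_commute)
qed

lemma st_eq_13_2E:
  assumes fin: "finite (\<Union>\<tau>)" and \<tau>: "st \<tau> = {{1, 3}, {2}}"
  obtains T1 T2 x y z where "T1 \<in> \<tau>" "T2 \<in> \<tau>" "T1 \<noteq> T2" "x \<in> T1" "z \<in> T1" "y \<in> T2"
    "x < y" "y < z"
proof -
  define S where "S = \<Union>\<tau>"
  have "{1, 3} \<in> st \<tau>" "{2} \<in> st \<tau>"
    using \<tau> by auto
  then obtain T1 T2 where T: "T1 \<in> \<tau>" "st_map S ` T1 = {1, 3}" "T2 \<in> \<tau>" "st_map S ` T2 = {2}"
    by (auto simp: st_def S_def)
  obtain x where x: "x \<in> T1" "st_map S x = 1"
    using T(2) by (metis imageE insertI1)
  obtain z where z: "z \<in> T1" "st_map S z = 3"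
    using T(2) by (metis imageE insertI1 insert_commute)
  obtain y where y: "y \<in> T2" "st_map S y = 2"
    using T(4) by (metis imageE insertI1)
  have "x \<in> S" "y \<in> S" "z \<in> S"
    using x y z T by (auto simp: S_def)
  then have "x < y" "y < z"
    using st_map_less_iff[OF fin[folded S_def] \<open>x \<in> S\<close> \<open>y \<in> S\<close>]
      st_map_less_iff[OF fin[folded S_def] \<open>y \<in> S\<close> \<open>z \<in> S\<close>] x y z
    by simp_all
  moreover have "T1 \<noteq> T2"
    using T by auto
  ultimately show thesis
    using that T x y z by blast
qed

lemma contains_13_2D:
  assumes \<sigma>: "\<sigma> \<in> set_partitions n" and "contains \<sigma> {{1, 3}, {2}}"
  shows "\<not> convex_blocks \<sigma>"
proof -
  obtain \<tau> f where \<tau>: "subpartition \<tau> \<sigma>" "st \<tau> = {{1, 3}, {2}}"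
    and f: "\<forall>B\<in>\<tau>. f B \<in> \<sigma> \<and> B \<subseteq> f B" "inj_on f \<tau>"
    using assms(2) by (auto simp: contains_def subpartition_def)
  obtain T1 T2 x y z where T: "T1 \<in> \<tau>" "T2 \<in> \<tau>" "T1 \<noteq> T2" "x \<in> T1" "z \<in> T1" "y \<in> T2"
    and "x < y" "y < z"
    using st_eq_13_2E[OF subpartition_finite[OF \<tau>(1) \<sigma>] \<tau>(2)] by metis
  have "f T1 \<noteq> f T2"
    using f(2) T by (auto simp: inj_on_def)
  moreover have "f T1 \<in> \<sigma>" "f T2 \<in> \<sigma>" "x \<in> f T1" "z \<in> f T1" "y \<in> f T2"
    using f T by auto
  ultimately have "y \<notin> f T1"
    using set_partitions_block_eq[OF \<sigma>] by metis
  moreover have "y \<in> {x..z}"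
    using \<open>x < y\<close> \<open>y < z\<close> by simp
  ultimately show "\<not> convex_blocks \<sigma>"
    unfolding convex_blocks_def using \<open>f T1 \<in> \<sigma>\<close> \<open>x \<in> f T1\<close> \<open>z \<in> f T1\<close> by blast
qed

lemma contains_13_2I:
  assumes \<sigma>: "\<sigma> \<in> set_partitions n"
    and B: "B \<in> \<sigma>" "x \<in> B" "z \<in> B" "x < y" "y < z" "y \<notin> B"
  shows "contains \<sigma> {{1, 3}, {2}}"
proof -
  have "y \<in> {1..n}"
    using B set_partitions_block_subset[OF \<sigma> B(1)] by auto
  then have "y \<in> \<Union>\<sigma>"
    using \<sigma> by (simp add: set_partitions_iff)
  then obtain D where D: "D \<in> \<sigma>" "y \<in> D"
    by blast
  have "subpartition {{x, z}, {y}} \<sigma>"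
  proof (rule subpartitionI)
    show "partition_on (\<Union>{{x, z}, {y}}) {{x, z}, {y}}"
      using B(4,5) by (auto simp: partition_on_def disjoint_def)
    show "\<exists>D\<in>\<sigma>. T \<subseteq> D" if "T \<in> {{x, z}, {y}}" for T
      using that B D by auto
    show "T1 = T2" if "T1 \<in> {{x, z}, {y}}" "T2 \<in> {{x, z}, {y}}" "E \<in> \<sigma>" "T1 \<subseteq> E" "T2 \<subseteq> E"
      for T1 T2 E
      using that set_partitions_block_eq[OF \<sigma> that(3) B(1), of x]
        set_partitions_block_eq[OF \<sigma> that(3) D(1), of y] B D by auto
  qed
  then show ?thesis
    using st_13_2[OF B(4,5)] by (auto simp: contains_def)
qed

lemma contains_13_2_iff:
  assumes \<sigma>: "\<sigma> \<in> set_partitions n"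
  shows "contains \<sigma> {{1, 3}, {2}} \<longleftrightarrow> \<not> convex_blocks \<sigma>"
proof
  assume "\<not> convex_blocks \<sigma>"
  then obtain B x y z where "B \<in> \<sigma>" "x \<in> B" "z \<in> B" "y \<in> {x..z}" "y \<notin> B"
    unfolding convex_blocks_def by blast
  moreover from this have "x < y" "y < z"
    using le_neq_implies_less by fastforce+
  ultimately show "contains \<sigma> {{1, 3}, {2}}"
    using contains_13_2I[OF \<sigma>] by blast
qed (rule contains_13_2D[OF \<sigma>])

lemma convex_blocks_add_singleton: "convex_blocks (add_singleton n \<sigma>) \<longleftrightarrow> convex_blocks \<sigma>"
  by (auto simp: convex_blocks_def add_singleton_def)

lemma convex_blocks_add_to_block:
  assumes \<sigma>: "\<sigma> \<in> set_partitions n" and C: "C \<in> \<sigma>"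
  shows "convex_blocks (add_to_block n \<sigma> C) \<longleftrightarrow> convex_blocks \<sigma> \<and> n \<in> C"
proof
  assume convex: "convex_blocks (add_to_block n \<sigma> C)"
  have C': "insert (Suc n) C \<in> add_to_block n \<sigma> C"
    by (simp add: add_to_block_def)
  have "{x..z} \<subseteq> B" if "B \<in> \<sigma>" "x \<in> B" "z \<in> B" for B x z
  proof (cases "B = C")
    case True
    then have "{x..z} \<subseteq> insert (Suc n) C"
      using convex C' that by (auto simp: convex_blocks_def)
    moreover have "z \<le> n"
      using set_partitions_block_subset[OF \<sigma> that(1)] that(3) by auto
    ultimately show ?thesis
      using True by auto
  next
    case False
    then show ?thesis
      using convex that by (auto simp: convex_blocks_def add_to_block_def)
  qed
  moreover have "n \<in> C"
  proof -
    obtain x where "x \<in> C"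
      using set_partitions_block_nonempty[OF \<sigma> C] by blast
    then have "{x..Suc n} \<subseteq> insert (Suc n) C"
      using convex C' by (auto simp: convex_blocks_def)
    moreover have "n \<in> {x..Suc n}"
      using set_partitions_block_subset[OF \<sigma> C] \<open>x \<in> C\<close> by auto
    ultimately have "n \<in> insert (Suc n) C"
      by (rule subsetD)
    then show ?thesis
      by simp
  qed
  ultimately show "convex_blocks \<sigma> \<and> n \<in> C"
    unfolding convex_blocks_def by blast
next
  assume "convex_blocks \<sigma> \<and> n \<in> C"
  then have convex: "convex_blocks \<sigma>" and "n \<in> C"
    by auto
  have "{x..z} \<subseteq> insert (Suc n) C" if xz: "x \<in> insert (Suc n) C" "z \<in> insert (Suc n) C" for x z
  proof -
    have "z \<le> Suc n"
      using xz(2) set_partitions_block_subset[OF \<sigma> C] by auto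
    then have "{x..z} \<subseteq> insert (Suc n) {x..n}"
      by auto
    moreover have "{x..n} \<subseteq> C" if "x \<in> C"
      using convex C \<open>n \<in> C\<close> that by (auto simp: convex_blocks_def)
    ultimately show ?thesis
      using xz(1) by (cases "x = Suc n") auto
  qed
  then show "convex_blocks (add_to_block n \<sigma> C)"
    using convex by (auto simp: convex_blocks_def add_to_block_def)
qed

lemma card_blocks_containing:
  assumes \<sigma>: "\<sigma> \<in> set_partitions n"
  shows "card {C\<in>\<sigma>. x \<in> C} = (if x \<in> {1..n} then 1 else 0)"
proof (cases "x \<in> {1..n}")
  case True
  then have "x \<in> \<Union>\<sigma>"
    using \<sigma> by (simp add: set_partitions_iff)
  then obtain C where "C \<in> \<sigma>" "x \<in> C"
    by blast
  then have "{C'\<in>\<sigma>. x \<in> C'} = {C}"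
    using set_partitions_block_eq[OF \<sigma>] by blast
  then show ?thesis
    using True by simp
next
  case False
  then have "{C\<in>\<sigma>. x \<in> C} = {}"
    using set_partitions_block_subset[OF \<sigma>] by blast
  then show ?thesis
    using False by (simp only: card.empty if_False)
qed

lemma card_convex_partitions_Suc:
  "card {\<rho>\<in>set_partitions (Suc n). convex_blocks \<rho>} =
    (if n = 0 then 1 else 2) * card {\<sigma>\<in>set_partitions n. convex_blocks \<sigma>}"
proof -
  have blocks_with_n: "(\<Sum>C\<in>\<sigma>. of_bool (n \<in> C)) = (if n = 0 then 0 else 1 :: nat)"
    if "\<sigma> \<in> set_partitions n" for \<sigma>
    using card_blocks_containing[OF that, of n] set_partitions_finite[OF that] by (simp add: Int_def)
  have "card {\<rho>\<in>set_partitions (Suc n). convex_blocks \<rho>} =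
      (\<Sum>\<sigma>\<in>set_partitions n. of_bool (convex_blocks (add_singleton n \<sigma>))
        + (\<Sum>C\<in>\<sigma>. of_bool (convex_blocks (add_to_block n \<sigma> C))))"
    by (simp only: of_nat_card_set_partitions_filter[where 'a = nat, simplified] sum_set_partitions_Suc)
  also have "\<dots> = (\<Sum>\<sigma>\<in>set_partitions n. (if n = 0 then 1 else 2) * of_bool (convex_blocks \<sigma>))"
  proof (rule sum.cong[OF refl])
    fix \<sigma>
    assume \<sigma>: "\<sigma> \<in> set_partitions n"
    have "(\<Sum>C\<in>\<sigma>. of_bool (convex_blocks (add_to_block n \<sigma> C))) =
        of_bool (convex_blocks \<sigma>) * (\<Sum>C\<in>\<sigma>. of_bool (n \<in> C) :: nat)"
      by (simp add: sum_distrib_left convex_blocks_add_to_block[OF \<sigma>] cong: sum.cong)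
    then show "of_bool (convex_blocks (add_singleton n \<sigma>)) + (\<Sum>C\<in>\<sigma>. of_bool (convex_blocks (add_to_block n \<sigma> C))) =
        (if n = 0 then 1 else 2) * (of_bool (convex_blocks \<sigma>) :: nat)"
      by (simp add: convex_blocks_add_singleton blocks_with_n[OF \<sigma>])
  qed
  also have "\<dots> = (if n = 0 then 1 else 2) * card {\<sigma>\<in>set_partitions n. convex_blocks \<sigma>}"
    by (simp add: sum_distrib_left[symmetric] of_nat_card_set_partitions_filter[where 'a = nat, simplified])
  finally show ?thesis .
qed

theorem P_recursive_avoiders_13_2: "P_recursive (\<lambda>n. real (card (avoiders n {{1, 3}, {2}})))"
proof -
  define a where "a n = real (card {\<sigma>\<in>set_partitions n. convex_blocks \<sigma>})" for n
  have "avoiders n {{1, 3}, {2}} = {\<sigma>\<in>set_partitions n. convex_blocks \<sigma>}" for n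
    using contains_13_2_iff by (auto simp: avoiders_def)
  then have "(\<lambda>n. real (card (avoiders n {{1, 3}, {2}}))) = a"
    by (intro ext) (simp add: a_def)
  moreover have "shift_apply [:0, -2, 1:] a n = 0" for n
    by (simp add: shift_apply_pCons a_def card_convex_partitions_Suc)
  then have "C_finite a"
    unfolding C_finite_def by (intro exI[of _ "[:0, -2, 1:]"]) simp
  ultimately show ?thesis
    using C_finite_imp_P_recursive by simp
qed

section \<open>Reflection\<close>

definition reflect :: "nat \<Rightarrow> nat \<Rightarrow> nat" where
  "reflect N x = Suc N - x"

definition reflect_partition :: "nat \<Rightarrow> nat set set \<Rightarrow> nat set set" where
  "reflect_partition N \<rho> = (`) (reflect N) ` \<rho>"

lemma reflect_reflect: "x \<le> Suc N \<Longrightarrow> reflect N (reflect N x) = x"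
  by (simp add: reflect_def)

lemma inj_on_reflect:
  assumes "A \<subseteq> {1..N}"
  shows "inj_on (reflect N) A"
proof (rule inj_onI)
  fix x y
  assume "x \<in> A" "y \<in> A" "reflect N x = reflect N y"
  moreover have "x \<le> N" "y \<le> N"
    using assms \<open>x \<in> A\<close> \<open>y \<in> A\<close> by auto
  ultimately show "x = y"
    by (simp add: reflect_def)
qed

lemma reflect_image_reflect_image: "B \<subseteq> {1..N} \<Longrightarrow> reflect N ` reflect N ` B = B"
  by (force simp: image_image reflect_reflect intro: image_eqI[of _ "\<lambda>x. reflect N (reflect N x)"])

lemma reflect_image_interval: "reflect N ` {1..N} = {1..N}"
proof -
  have "reflect N ` {1..N} \<subseteq> {1..N}"
    by (auto simp: reflect_def)
  moreover have "card (reflect N ` {1..N}) = N"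
    using card_image[OF inj_on_reflect[of "{1..N}" N]] by auto
  ultimately show ?thesis
    by (intro card_subset_eq) auto
qed

lemma reflect_partition_in_set_partitions:
  assumes \<sigma>: "\<sigma> \<in> set_partitions n"
  shows "reflect_partition n \<sigma> \<in> set_partitions n"
proof -
  have "partition_on (reflect n ` {1..n}) ((`) (reflect n) ` \<sigma> - {{}})"
    using \<sigma> by (intro partition_on_inj_image) (auto simp: set_partitions_def intro: inj_on_reflect)
  then have "partition_on {1..n} ((`) (reflect n) ` \<sigma> - {{}})"
    by (simp only: reflect_image_interval)
  moreover have "(`) (reflect n) ` \<sigma> - {{}} = reflect_partition n \<sigma>"
    using set_partitions_block_nonempty[OF \<sigma>] by (auto simp: reflect_partition_def)
  ultimately show ?thesis
    by (simp add: set_partitions_def)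
qed

lemma reflect_partition_reflect_partition:
  assumes "\<And>B. B \<in> \<rho> \<Longrightarrow> B \<subseteq> {1..N}"
  shows "reflect_partition N (reflect_partition N \<rho>) = \<rho>"
proof -
  have "reflect_partition N (reflect_partition N \<rho>) = (\<lambda>B. reflect N ` reflect N ` B) ` \<rho>"
    by (simp add: reflect_partition_def image_image)
  also have "\<dots> = (\<lambda>B. B) ` \<rho>"
    by (rule image_cong[OF refl]) (rule reflect_image_reflect_image[OF assms])
  finally show ?thesis
    by simp
qed

lemma st_map_reflect:
  assumes "finite S" "S \<subseteq> {1..N}" "x \<in> S"
  shows "st_map (reflect N ` S) (reflect N x) = reflect (card S) (st_map S x)"
proof -
  have "{y \<in> reflect N ` S. y < reflect N x} = reflect N ` {w\<in>S. x < w}"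
    using assms(2,3) by (auto simp: reflect_def)
  moreover have "inj_on (reflect N) {w\<in>S. x < w}"
    using assms(2) by (intro inj_on_reflect) auto
  ultimately have "card {y \<in> reflect N ` S. y < reflect N x} = card {w\<in>S. x < w}"
    by (simp add: card_image)
  moreover have "S = insert x ({w\<in>S. w < x} \<union> {w\<in>S. x < w})"
    using assms(3) by auto
  then have "card S = Suc (card {w\<in>S. w < x} + card {w\<in>S. x < w})"
    using assms(1) by (metis (no_types, lifting) card_Un_disjoint card_insert_disjoint finite_Un
        finite_subset Un_iff disjoint_iff mem_Collect_eq less_asym less_irrefl subset_insertI)
  ultimately show ?thesis
    by (simp add: st_map_def reflect_def)
qed

lemma st_reflect_partition:
  assumes "finite (\<Union>\<tau>)" "\<Union>\<tau> \<subseteq> {1..N}"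
  shows "st (reflect_partition N \<tau>) = reflect_partition (card (\<Union>\<tau>)) (st \<tau>)"
proof -
  have "\<Union>(reflect_partition N \<tau>) = reflect N ` \<Union>\<tau>"
    by (auto simp: reflect_partition_def)
  moreover have "st_map (reflect N ` \<Union>\<tau>) ` reflect N ` T = reflect (card (\<Union>\<tau>)) ` st_map (\<Union>\<tau>) ` T"
    if "T \<in> \<tau>" for T
    using st_map_reflect[OF assms] that by (auto simp: image_image intro!: image_cong)
  ultimately show ?thesis
    by (simp add: st_def reflect_partition_def image_image cong: image_cong)
qed

lemma subpartition_reflect_partition:
  assumes \<tau>: "subpartition \<tau> \<sigma>" and \<sigma>: "\<sigma> \<in> set_partitions n"
  shows "subpartition (reflect_partition n \<tau>) (reflect_partition n \<sigma>)"
proof (rule subpartitionI)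
  obtain f where f: "\<forall>B\<in>\<tau>. f B \<in> \<sigma> \<and> B \<subseteq> f B" "inj_on f \<tau>"
    using \<tau> by (auto simp: subpartition_def)
  have S: "\<Union>\<tau> \<subseteq> {1..n}"
    using subpartition_Union_subset[OF \<tau> \<sigma>] .
  have "{} \<notin> \<tau>"
    using \<tau> by (simp add: subpartition_def partition_on_def)
  have "partition_on (reflect n ` \<Union>\<tau>) ((`) (reflect n) ` \<tau> - {{}})"
    using \<tau> inj_on_reflect[OF S] unfolding subpartition_def by (intro partition_on_inj_image) auto
  moreover have "(`) (reflect n) ` \<tau> - {{}} = reflect_partition n \<tau>"
    using \<open>{} \<notin> \<tau>\<close> by (auto simp: reflect_partition_def)
  moreover have "\<Union>(reflect_partition n \<tau>) = reflect n ` \<Union>\<tau>"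
    by (auto simp: reflect_partition_def)
  ultimately show "partition_on (\<Union>(reflect_partition n \<tau>)) (reflect_partition n \<tau>)"
    by simp
  show "\<exists>D\<in>reflect_partition n \<sigma>. T \<subseteq> D" if "T \<in> reflect_partition n \<tau>" for T
    using that f by (auto simp: reflect_partition_def)
  have uniq: "D = f T" if "T \<in> \<tau>" "D \<in> \<sigma>" "T \<subseteq> D" for T D
  proof -
    obtain x where "x \<in> T"
      using \<open>{} \<notin> \<tau>\<close> \<open>T \<in> \<tau>\<close> by (metis all_not_in_conv)
    then show ?thesis
      using set_partitions_block_eq[OF \<sigma> that(2), of "f T" x] f that by auto
  qed
  show "T1 = T2"
    if T: "T1 \<in> reflect_partition n \<tau>" "T2 \<in> reflect_partition n \<tau>" "D \<in> reflect_partition n \<sigma>"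
      "T1 \<subseteq> D" "T2 \<subseteq> D" for T1 T2 D
  proof -
    obtain U1 U2 D' where U: "U1 \<in> \<tau>" "U2 \<in> \<tau>" "D' \<in> \<sigma>"
      "T1 = reflect n ` U1" "T2 = reflect n ` U2" "D = reflect n ` D'"
      using T(1-3) by (auto simp: reflect_partition_def)
    have "U1 \<subseteq> {1..n}" "U2 \<subseteq> {1..n}"
      using U S by auto
    then have "U1 \<subseteq> D'" "U2 \<subseteq> D'"
      using T(4,5) U reflect_image_reflect_image set_partitions_block_subset[OF \<sigma> U(3)]
      by (metis image_mono)+
    then show ?thesis
      using uniq U f(2) by (metis inj_onD)
  qed
qed

lemma contains_reflect_partition:
  assumes \<sigma>: "\<sigma> \<in> set_partitions n" and "contains \<sigma> \<pi>"
  shows "contains (reflect_partition n \<sigma>) (reflect_partition (card (\<Union>\<pi>)) \<pi>)"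
proof -
  obtain \<tau> where \<tau>: "subpartition \<tau> \<sigma>" "st \<tau> = \<pi>"
    using assms(2) by (auto simp: contains_def)
  have S: "finite (\<Union>\<tau>)" "\<Union>\<tau> \<subseteq> {1..n}"
    using subpartition_finite[OF \<tau>(1) \<sigma>] subpartition_Union_subset[OF \<tau>(1) \<sigma>] by auto
  have "card (\<Union>\<pi>) = card (\<Union>\<tau>)"
    using Union_st[of \<tau>] \<tau>(2) inj_on_st_map[OF S(1)] by (simp add: card_image)
  then have "st (reflect_partition n \<tau>) = reflect_partition (card (\<Union>\<pi>)) \<pi>"
    using st_reflect_partition[OF S] \<tau>(2) by simp
  then show ?thesis
    using subpartition_reflect_partition[OF \<tau>(1) \<sigma>] by (auto simp: contains_def)
qed

lemma card_avoiders_reflect_partition_le: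
  assumes \<pi>: "partition_on {1..k} \<pi>"
  shows "card (avoiders n \<pi>) \<le> card (avoiders n (reflect_partition k \<pi>))"
proof (rule card_inj_on_le)
  have "\<Union>(reflect_partition k \<pi>) = reflect k ` \<Union>\<pi>"
    by (auto simp: reflect_partition_def)
  then have \<pi>': "\<Union>(reflect_partition k \<pi>) = {1..k}"
    using \<pi> reflect_image_interval[of k] by (simp add: partition_on_def)
  have "\<And>B. B \<in> \<pi> \<Longrightarrow> B \<subseteq> {1..k}"
    using \<pi> by (auto simp: partition_on_def)
  then have reflect_twice: "reflect_partition k (reflect_partition k \<pi>) = \<pi>"
    by (rule reflect_partition_reflect_partition)
  show "reflect_partition n ` avoiders n \<pi> \<subseteq> avoiders n (reflect_partition k \<pi>)"
  proof
    fix \<rho>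
    assume "\<rho> \<in> reflect_partition n ` avoiders n \<pi>"
    then obtain \<sigma> where \<sigma>: "\<sigma> \<in> set_partitions n" "\<not> contains \<sigma> \<pi>" "\<rho> = reflect_partition n \<sigma>"
      by (auto simp: avoiders_def)
    have \<rho>: "\<rho> \<in> set_partitions n"
      using reflect_partition_in_set_partitions[OF \<sigma>(1)] \<sigma>(3) by simp
    have "reflect_partition n \<rho> = \<sigma>"
      using \<sigma> reflect_partition_reflect_partition set_partitions_block_subset by metis
    then have "\<not> contains \<rho> (reflect_partition k \<pi>)"
      using contains_reflect_partition[OF \<rho>, of "reflect_partition k \<pi>"] \<pi>' reflect_twice \<sigma>(2) by auto
    then show "\<rho> \<in> avoiders n (reflect_partition k \<pi>)"
      using \<rho> by (simp add: avoiders_def)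
  qed
  show "inj_on (reflect_partition n) (avoiders n \<pi>)"
    by (rule inj_onI) (metis reflect_partition_reflect_partition set_partitions_block_subset
        avoiders_def mem_Collect_eq)
  show "finite (avoiders n (reflect_partition k \<pi>))"
    using finite_set_partitions by (simp add: avoiders_def)
qed

theorem card_avoiders_reflect_partition:
  assumes \<pi>: "partition_on {1..k} \<pi>"
  shows "card (avoiders n (reflect_partition k \<pi>)) = card (avoiders n \<pi>)"
proof (rule antisym)
  have "reflect_partition k \<pi> \<in> set_partitions k"
    using \<pi> by (intro reflect_partition_in_set_partitions) (simp add: set_partitions_def)
  moreover have "reflect_partition k (reflect_partition k \<pi>) = \<pi>"
    using \<pi> by (intro reflect_partition_reflect_partition) (auto simp: partition_on_def)
  ultimately show "card (avoiders n (reflect_partition k \<pi>)) \<le> card (avoiders n \<pi>)"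
    using card_avoiders_reflect_partition_le[of k "reflect_partition k \<pi>" n]
    by (simp add: set_partitions_def)
qed (rule card_avoiders_reflect_partition_le[OF \<pi>])

section \<open>Patterns of size three\<close>

lemma partition_on_three_cases:
  fixes \<pi> :: "nat set set"
  assumes "partition_on {1..3} \<pi>"
  shows "\<pi> = {{1}, {2}, {3}} \<or> \<pi> = {{1, 2, 3}} \<or> \<pi> = {{1, 2}, {3}} \<or> \<pi> = {{1}, {2, 3}} \<or>
    \<pi> = {{1, 3}, {2}}"
proof -
  define r where "r = {(x, y). \<exists>p\<in>\<pi>. x \<in> p \<and> y \<in> p}"
  have "{1..3} = {1, 2, 3 :: nat}"
    by auto
  then have \<pi>: "partition_on {1, 2, 3} \<pi>"
    using assms by simp
  have r: "equiv {1, 2, 3} r"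
    unfolding r_def by (rule equiv_partition_on[OF \<pi>])
  have "\<pi> = {r``{1}, r``{2}, r``{3}}"
    using partition_on_eq_quotient[OF \<pi>] by (auto simp: quotient_def r_def)
  moreover have "r``{i} = {j\<in>{1, 2, 3}. (i, j) \<in> r}" for i
    using r by (auto simp: equiv_def refl_on_def)
  moreover have "{j\<in>{1, 2, 3}. P j} = (if P 1 then {1} else {}) \<union> (if P 2 then {2} else {}) \<union>
      (if P 3 then {3 :: nat} else {})" for P
    by auto
  moreover have "(1, 1) \<in> r" "(2, 2) \<in> r" "(3, 3) \<in> r"
    "(2, 1) \<in> r \<longleftrightarrow> (1, 2) \<in> r" "(3, 1) \<in> r \<longleftrightarrow> (1, 3) \<in> r" "(3, 2) \<in> r \<longleftrightarrow> (2, 3) \<in> r"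
    "(1, 2) \<in> r \<Longrightarrow> (2, 3) \<in> r \<Longrightarrow> (1, 3) \<in> r" "(1, 2) \<in> r \<Longrightarrow> (1, 3) \<in> r \<Longrightarrow> (2, 3) \<in> r"
    "(1, 3) \<in> r \<Longrightarrow> (2, 3) \<in> r \<Longrightarrow> (1, 2) \<in> r"
    using r unfolding equiv_def refl_on_def by (blast elim: symE transE)+
  ultimately show ?thesis
    by (cases "(1, 2) \<in> r"; cases "(1, 3) \<in> r"; cases "(2, 3) \<in> r") (simp_all add: insert_commute)
qed

theorem theorem3p7:
  shows "(\<forall>m\<ge>1. P_recursive (\<lambda>n. real (card (avoiders n (singletons_part m))))
                 \<and> P_recursive (\<lambda>n. real (card (avoiders n (oneblock_part m)))))
       \<and> (\<forall>m\<ge>2. P_recursive (\<lambda>n. real (card (avoiders n (pair_singletons_part m)))))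
       \<and> (\<forall>\<pi>. partition_on {1..3} \<pi> \<longrightarrow> P_recursive (\<lambda>n. real (card (avoiders n \<pi>))))"
proof (intro conjI allI impI)
  fix \<pi> :: "nat set set"
  assume \<pi>: "partition_on {1..3} \<pi>"
  have "{1..3 :: nat} = {1, 2, 3}"
    by auto
  then have parts:
    "singletons_part 3 = {{1}, {2}, {3}}" "oneblock_part 3 = {{1, 2, 3}}"
    "pair_singletons_part 3 = {{1, 2}, {3}}" "reflect_partition 3 {{1, 2}, {3}} = {{1}, {2, 3}}"
    by (simp_all add: singletons_part_def oneblock_part_def pair_singletons_part_def
        reflect_partition_def reflect_def insert_commute)
  have "partition_on {1..3} {{1, 2}, {3 :: nat}}"
    using \<open>{1..3} = {1, 2, 3}\<close> by (auto simp: partition_on_def disjoint_def)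
  then have "card (avoiders n {{1}, {2, 3}}) = card (avoiders n (pair_singletons_part 3))" for n
    using card_avoiders_reflect_partition[of 3 "{{1, 2}, {3}}" n] parts by simp
  then show "P_recursive (\<lambda>n. real (card (avoiders n \<pi>)))"
    using partition_on_three_cases[OF \<pi>] parts P_recursive_avoiders_singletons_part[of 3]
      P_recursive_avoiders_oneblock_part[of 3] P_recursive_avoiders_pair_singletons_part[of 3]
      P_recursive_avoiders_13_2
    by auto
qed (simp_all add: P_recursive_avoiders_singletons_part P_recursive_avoiders_oneblock_part
    P_recursive_avoiders_pair_singletons_part)

end
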